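(* Let $T\in\mathcal{T}_h^\Gamma$ and $r_T=|L_T|$. For every polynomial $v\in\mathbb{P}^k(T)$ (extended polynomially to $\mathbb{R}^2$) and $j=0,1$, $$h_T^j\|D^jv\|_{L^\infty(T)}\le C\,h_T^k\sum_{\ell=0}^k\frac{1}{r_T^{\ell}}\max_{0\le i\le\ell}\big|D_{\eta}^{k-\ell}v(x_i^{\ell,T})\big|,$$ where $C$ depends only on the shape regularity of $T$, on $k$, and on the regularity of $\Gamma$.
   Context: $\Omega\subset\mathbb{R}^2$ is a polygonal domain containing a smooth closed curve $\Gamma$ enclosing the open set $\Omega^-$; $\Omega^+=\Omega\setminus\overline{\Omega^-}$. $\mathcal{T}_h$ is a shape-regular, quasi-uniform triangulation of $\Omega$, $h_T=\operatorname{diam}T$, and $k\ge1$ is an integer. Standing assumption: $\Gamma$ meets the boundary of each triangle in at most two points, and if in exactly two points they lie on different edges. $\mathcal{T}_h^\Gamma$ is the set of $T\in\mathcal{T}_h$ with $T\cap\Gamma\ne\emptyset$. For $T\in\mathcal{T}_h^\Gamma$: $y_T,z_T$ are the two endpoints of $T\cap\Gamma$, $L_T$ is the segment joining them, $T^\pm=T\cap\Omega^\pm$, $\eta$ is the unit vector perpendicular to $L_T$ pointing out of $T^-$, and $\tau$ is $\eta$ rotated by $90^\circ$ counterclockwise; $D_\eta$ denotes the directional derivative in direction $\eta$. For $\ell=0,\dots,k$, $\{\bar x_i^{\ell,T}\}_{i=0}^{\ell}$ are the $\ell+1$ Gauss–Legendre points of the segment $L_T$, and $x_i^{\ell,T}$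 is the intersection of $\Gamma$ with the line through $\bar x_i^{\ell,T}$ perpendicular to $L_T$. *)

theory Defs
  imports "HOL-Analysis.Analysis"
begin

definition poly2 :: "nat \<Rightarrow> (real^2 \<Rightarrow> real) \<Rightarrow> bool" where
  "poly2 k v \<longleftrightarrow> (\<exists>c :: nat \<Rightarrow> nat \<Rightarrow> real.
      \<forall>x. v x = (\<Sum>a\<le>k. \<Sum>b\<le>k - a. c a b * (x$1) ^ a * (x$2) ^ b))"

definition grad :: "(real^2 \<Rightarrow> real) \<Rightarrow> real^2 \<Rightarrow> real^2" where
  "grad f x = (\<chi> i. frechet_derivative f (at x) (axis i 1))"

definition dirderiv :: "real^2 \<Rightarrow> (real^2 \<Rightarrow> real) \<Rightarrow> real^2 \<Rightarrow> real" where
  "dirderiv e f x = frechet_derivative f (at x) e"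

definition dirderiv_pow :: "nat \<Rightarrow> real^2 \<Rightarrow> (real^2 \<Rightarrow> real) \<Rightarrow> real^2 \<Rightarrow> real" where
  "dirderiv_pow m e f = (dirderiv e ^^ m) f"

text \<open>Legendre polynomials via Bonnet's recursion, and Gauss--Legendre nodes on [-1,1].\<close>
fun legendre :: "nat \<Rightarrow> real \<Rightarrow> real" where
  "legendre 0 t = 1"
| "legendre (Suc 0) t = t"
| "legendre (Suc (Suc n)) t =
     ((2 * real n + 3) * t * legendre (Suc n) t - (real n + 1) * legendre n t) / (real n + 2)"

definition gl_nodes :: "nat \<Rightarrow> real set" where
  "gl_nodes l = {t. -1 \<le> t \<and> t \<le> 1 \<and> legendre (Suc l) t = 0}"

definition gl_point :: "real^2 \<Rightarrow> real^2 \<Rightarrow> real \<Rightarrow> real^2" where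
  "gl_point y z t = y + ((1 + t) / 2) *\<^sub>R (z - y)"

definition vderiv :: "(real \<Rightarrow> real^2) \<Rightarrow> real \<Rightarrow> real^2" where
  "vderiv f t = vector_derivative f (at t)"

definition smooth_closed_curve :: "(real \<Rightarrow> real^2) \<Rightarrow> bool" where
  "smooth_closed_curve \<gamma> \<longleftrightarrow>
     (\<forall>n t. ((vderiv ^^ n) \<gamma>) differentiable (at t))
   \<and> (\<forall>t. \<gamma> (t + 1) = \<gamma> t)
   \<and> inj_on \<gamma> {0..<1}
   \<and> (\<forall>t. vderiv \<gamma> t \<noteq> 0)"

definition nondeg_triangle :: "real^2 \<Rightarrow> real^2 \<Rightarrow> real^2 \<Rightarrow> bool" where
  "nondeg_triangle a b c \<longleftrightarrow> \<not> collinear {a, b, c}"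

definition inradius :: "(real^2) set \<Rightarrow> real" where
  "inradius T = Sup {r. 0 \<le> r \<and> (\<exists>p. ball p r \<subseteq> T)}"

definition shape_param :: "(real^2) set \<Rightarrow> real" where
  "shape_param T = diameter T / inradius T"

end

theory Submission
  imports Defs "HOL-Computational_Algebra.Polynomial"
begin

text \<open>
  In coordinates centred at the midpoint of \<open>L\<^sub>T\<close>, aligned with \<open>L\<^sub>T\<close> and scaled by \<open>2 / r\<^sub>T\<close>, the
  chord becomes \<open>[-1, 1] \<times> {0}\<close>, \<open>v\<close> becomes a polynomial \<open>Q(s, w) = \<Sum>\<^sub>b q\<^sub>b(s) w\<^sup>b\<close> of total degree
  \<open>k\<close>, and \<open>D\<^sub>\<eta>\<close> becomes \<open>(2 / r\<^sub>T) \<partial>\<^sub>w\<close>. Because \<open>\<Gamma>\<close> is smooth, a short arc stays within distance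
  \<open>O(r\<^sub>T\<^sup>2)\<close> of its chord, so the points \<open>x\<^sub>i\<^sup>l\<close> lie at height \<open>|w| \<le> 2\<close> above the Gauss--Legendre
  nodes \<open>t\<^sub>i\<^sup>l\<close> of \<open>[-1, 1]\<close>. The datum \<open>\<partial>\<^sub>w\<^sup>k\<^sup>-\<^sup>l Q(t\<^sub>i\<^sup>l, w\<^sub>i\<^sup>l)\<close> equals \<open>(k - l)! q\<^sub>k\<^sub>-\<^sub>l(t\<^sub>i\<^sup>l)\<close> plus terms
  involving only coefficients \<open>q\<^sub>b\<close> with \<open>b > k - l\<close>. Downward induction on \<open>b\<close> together with
  Lagrange interpolation at the \<open>l + 1\<close> nodes therefore bounds every \<open>q\<^sub>b\<close>, hence \<open>Q\<close> and its gradient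
  on the image of \<open>T\<close>, which lies in the square of half-width \<open>2 h\<^sub>T / r\<^sub>T\<close>; scaling back gives the
  estimate. That \<open>P\<^sub>l\<^sub>+\<^sub>1\<close> has \<open>l + 1\<close> distinct roots in \<open>(-1, 1)\<close> follows from the classical
  interlacing induction on Bonnet's recursion.
\<close>

section \<open>Legendre polynomials and Gauss--Legendre nodes\<close>

fun legendre_poly :: "nat \<Rightarrow> real poly" where
  "legendre_poly 0 = 1"
| "legendre_poly (Suc 0) = [:0, 1:]"
| "legendre_poly (Suc (Suc n)) =
     smult (1 / (real n + 2))
       (smult (2 * real n + 3) ([:0, 1:] * legendre_poly (Suc n)) - smult (real n + 1) (legendre_poly n))"

lemma poly_legendre_poly: "poly (legendre_poly n) t = legendre n t"
  by (induction n rule: legendre_poly.induct) (simp_all add: field_simps)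

lemma legendre_at_1: "legendre n 1 = 1"
  by (induction n rule: legendre_poly.induct) (simp_all add: field_simps)

lemma legendre_at_neg_1: "legendre n (-1) = (-1) ^ n"
  by (induction n rule: legendre_poly.induct) (simp_all add: field_simps)

lemma legendre_poly_nonzero: "legendre_poly n \<noteq> 0"
  using legendre_at_1[of n] by (auto simp flip: poly_legendre_poly)

lemma degree_legendre_poly: "degree (legendre_poly n) \<le> n"
proof (induction n rule: legendre_poly.induct)
  case (3 n)
  have "degree ([:0, 1:] * legendre_poly (Suc n)) \<le> Suc (Suc n)"
    using degree_mult_le[of "[:0, 1::real:]" "legendre_poly (Suc n)"] 3 by auto
  then have "degree (smult (2 * real n + 3) ([:0, 1:] * legendre_poly (Suc n))
                - smult (real n + 1) (legendre_poly n)) \<le> Suc (Suc n)"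
    using 3 by (meson degree_diff_le degree_smult_le le_Suc_eq order_trans)
  then show ?case
    by (simp add: order_trans[OF degree_smult_le])
qed auto

lemma continuous_on_legendre: "continuous_on A (legendre n)"
proof -
  have "legendre n = poly (legendre_poly n)"
    by (simp add: fun_eq_iff poly_legendre_poly)
  then show ?thesis
    by (simp add: continuous_on_poly)
qed

lemma legendre_Suc:
  "1 \<le> n \<Longrightarrow>
   legendre (Suc n) t = ((2 * real n + 1) * t * legendre n t - real n * legendre (n - 1) t) / (real n + 1)"
  by (cases n) (simp_all add: field_simps)

lemma real_IVT_sign_change:
  fixes f :: "real \<Rightarrow> real"
  assumes "a < b" "continuous_on {a..b} f" "f a * f b < 0"
  obtains x where "a < x" "x < b" "f x = 0"
proof -
  have "\<exists>x. a \<le> x \<and> x \<le> b \<and> f x = 0"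
    using assms IVT'[of f a 0 b] IVT2'[of f b 0 a] by (auto simp: mult_less_0_iff)
  moreover have "f a \<noteq> 0" "f b \<noteq> 0"
    using assms(3) by auto
  ultimately show ?thesis
    using that by force
qed

lemma same_sign_if_no_root_between:
  fixes f :: "real \<Rightarrow> real"
  assumes "continuous_on UNIV f" and "\<And>x. min a b \<le> x \<Longrightarrow> x \<le> max a b \<Longrightarrow> f x \<noteq> 0"
  shows "f a * f b > 0"
proof (rule ccontr)
  assume "\<not> f a * f b > 0"
  moreover have "f a \<noteq> 0" "f b \<noteq> 0"
    using assms(2)[of a] assms(2)[of b] by auto
  ultimately have "f a * f b < 0"
    by (simp add: not_less order_le_less)
  moreover from this have "a \<noteq> b"
    by (metis not_square_less_zero)
  ultimately have "f (min a b) * f (max a b) < 0" "min a b < max a b"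
    by (auto simp: min_def max_def mult.commute not_square_less_zero)
  then obtain x where "min a b < x" "x < max a b" "f x = 0"
    using real_IVT_sign_change continuous_on_subset[OF assms(1)] by (metis subset_UNIV)
  with assms(2) show False
    by force
qed

lemma root_mem_if_degree_le_card:
  fixes p :: "real poly"
  assumes "p \<noteq> 0" "finite A" "degree p \<le> card A" "\<And>a. a \<in> A \<Longrightarrow> poly p a = 0" "poly p x = 0"
  shows "x \<in> A"
proof (rule ccontr)
  assume "x \<notin> A"
  then have "Suc (card A) = card (insert x A)"
    using assms(2) by simp
  also have "\<dots> \<le> card {x. poly p x = 0}"
    using assms by (intro card_mono poly_roots_finite) auto
  also have "\<dots> \<le> degree p"
    using card_poly_roots_bound assms(1) by blast
  finally show False
    using assms(3) by simp
qed

text \<open>Invariant of the interlacing induction: \<open>P\<^sub>n\<close> has \<open>n\<close> simple roots \<open>X 1 < \<dots> < X n\<close> in \<open>(-1, 1)\<close>,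
  at which \<open>P\<^sub>n\<^sub>-\<^sub>1\<close> alternates in sign.\<close>
definition legendre_interlacing :: "nat \<Rightarrow> (nat \<Rightarrow> real) \<Rightarrow> bool" where
  "legendre_interlacing n X \<longleftrightarrow>
     X 0 = -1 \<and> X (Suc n) = 1 \<and> strict_mono_on {..Suc n} X
   \<and> (\<forall>i\<in>{1..n}. legendre n (X i) = 0 \<and> (-1) ^ (n - i) * legendre (n - 1) (X i) > 0)
   \<and> (\<forall>i\<le>n. \<forall>t\<in>{X i<..<X (Suc i)}. (-1) ^ (n - i) * legendre n t > 0)"

lemma legendre_interlacing_1: "legendre_interlacing 1 (\<lambda>i. real i - 1)"
  by (auto simp: legendre_interlacing_def strict_mono_on_def numeral_2_eq_2 le_Suc_eq)

lemma legendre_Suc_sign_at_interlacing: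
  assumes "1 \<le> n" "legendre_interlacing n X" "i \<le> Suc n"
  shows "(-1) ^ (Suc n - i) * legendre (Suc n) (X i) > 0"
proof -
  consider "i = 0" | "i = Suc n" | "i \<in> {1..n}"
    using assms(3) by force
  then show ?thesis
  proof cases
    case 3
    \<comment> \<open>at a root of \<open>P\<^sub>n\<close> Bonnet's recursion gives \<open>P\<^sub>n\<^sub>+\<^sub>1 = -n/(n+1) P\<^sub>n\<^sub>-\<^sub>1\<close>\<close>
    with assms(2) have "legendre n (X i) = 0" "(-1) ^ (n - i) * legendre (n - 1) (X i) > 0"
      by (auto simp: legendre_interlacing_def)
    moreover have "(-1::real) ^ (Suc n - i) = - ((-1) ^ (n - i))"
      using 3 by (simp add: Suc_diff_le)
    ultimately have "(-1) ^ (Suc n - i) * legendre (Suc n) (X i)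
        = real n / (real n + 1) * ((-1) ^ (n - i) * legendre (n - 1) (X i))"
      using legendre_Suc[OF assms(1), of "X i"] by simp
    also have "\<dots> > 0"
      using assms(1) \<open>(-1) ^ (n - i) * legendre (n - 1) (X i) > 0\<close> by simp
    finally show ?thesis .
  qed (use assms(2) in \<open>auto simp: legendre_interlacing_def legendre_at_1 legendre_at_neg_1
                                    simp flip: power_add\<close>)
qed

lemma sign_const_between_consecutive_roots:
  fixes Y :: "nat \<Rightarrow> real" and p :: "real poly"
  assumes mono: "strict_mono_on {..Suc m} Y" and i: "i \<le> m"
    and roots: "\<And>x. poly p x = 0 \<Longrightarrow> \<exists>j\<in>{1..m}. x = Y j"
    and t: "t \<in> {Y i..Y (Suc i)}" "t' \<in> {Y i..Y (Suc i)}" "poly p t \<noteq> 0" "poly p t' \<noteq> 0"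
  shows "poly p t * poly p t' > 0"
proof (rule same_sign_if_no_root_between[where f = "poly p"])
  show "continuous_on UNIV (poly p)"
    by (intro continuous_intros)
  fix x assume x: "min t t' \<le> x" "x \<le> max t t'"
  show "poly p x \<noteq> 0"
  proof
    assume "poly p x = 0"
    then obtain j where j: "j \<in> {1..m}" "x = Y j"
      using roots by blast
    have "Y j \<le> Y i" if "j \<le> i"
      using strict_mono_on_leD[OF mono] that i by simp
    moreover have "Y (Suc i) \<le> Y j" if "Suc i \<le> j"
      using strict_mono_on_leD[OF mono] that j by simp
    ultimately have "x = t \<or> x = t'"
      using x t j by (cases "j \<le> i") (auto simp: min_def max_def split: if_splits)
    with \<open>poly p x = 0\<close> t show False
      by blast
  qed
qed

lemma legendre_Suc_roots_between:
  assumes n: "1 \<le> n" and X: "legendre_interlacing n X"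
  obtains Y where "Y 0 = -1" "Y (Suc (Suc n)) = 1" "strict_mono_on {..Suc (Suc n)} Y"
    and "\<And>i. i \<in> {1..Suc n} \<Longrightarrow> X (i - 1) < Y i \<and> Y i < X i \<and> legendre (Suc n) (Y i) = 0"
proof -
  let ?P = "legendre (Suc n)"
  have X0: "X 0 = -1" and X1: "X (Suc n) = 1" and Xmono: "strict_mono_on {..Suc n} X"
    using X by (simp_all add: legendre_interlacing_def)
  have "\<exists>y. X (j - 1) < y \<and> y < X j \<and> ?P y = 0" if j: "j \<in> {1..Suc n}" for j
  proof -
    have "X (j - 1) < X j"
      using Xmono j by (auto simp: strict_mono_on_def)
    moreover have "?P (X (j - 1)) * ?P (X j) < 0"
    proof -
      have "Suc n - (j - 1) = Suc (Suc n - j)"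
        using j by auto
      then show ?thesis
        using legendre_Suc_sign_at_interlacing[OF n X, of "j - 1"] legendre_Suc_sign_at_interlacing[OF n X, of j] j
        by (cases "even (Suc n - j)") (auto simp: mult_less_0_iff zero_less_mult_iff)
    qed
    ultimately show ?thesis
      using real_IVT_sign_change[OF _ continuous_on_legendre] by metis
  qed
  then obtain y where y: "\<And>j. j \<in> {1..Suc n} \<Longrightarrow> X (j - 1) < y j \<and> y j < X j \<and> ?P (y j) = 0"
    by metis
  define Y where "Y i = (if i = 0 then -1 else if i = Suc (Suc n) then 1 else y i)" for i
  have Y: "X (i - 1) < Y i \<and> Y i < X i \<and> ?P (Y i) = 0" if "i \<in> {1..Suc n}" for i
    using y[OF that] that by (auto simp: Y_def)
  have Xle: "X i \<le> X j" if "i \<le> j" "j \<le> Suc n" for i j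
    using strict_mono_on_leD[OF Xmono] that by simp
  have "strict_mono_on {..Suc (Suc n)} Y"
  proof (rule strict_mono_onI)
    fix i j assume ij: "i \<in> {..Suc (Suc n)}" "j \<in> {..Suc (Suc n)}" "i < j"
    have "Y i \<le> X i" if "i \<le> Suc n"
      using that Y[of i] X0 by (cases "i = 0") (auto simp: Y_def)
    show "Y i < Y j"
    proof (cases "j = Suc (Suc n)")
      case True
      then show ?thesis
        using ij Y[of i] Xle[of i "Suc n"] X1 by (cases "i = 0") (auto simp: Y_def)
    next
      case False
      with ij have "Y i \<le> X i" "X i \<le> X (j - 1)" "X (j - 1) < Y j"
        using \<open>i \<le> Suc n \<Longrightarrow> Y i \<le> X i\<close> Xle[of i "j - 1"] Y[of j] by auto
      then show ?thesis
        by linarith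
    qed
  qed
  then show ?thesis
    using Y by (intro that[of Y]) (simp_all add: Y_def)
qed

lemma legendre_interlacing_Suc:
  assumes n: "1 \<le> n" and X: "legendre_interlacing n X"
  shows "\<exists>Y. legendre_interlacing (Suc n) Y"
proof -
  let ?P = "legendre (Suc n)"
  obtain Y where Y0: "Y 0 = -1" and Y1: "Y (Suc (Suc n)) = 1" and Ymono: "strict_mono_on {..Suc (Suc n)} Y"
    and Y: "\<And>i. i \<in> {1..Suc n} \<Longrightarrow> X (i - 1) < Y i \<and> Y i < X i \<and> ?P (Y i) = 0"
    by (rule legendre_Suc_roots_between[OF n X]) blast
  have X0: "X 0 = -1" and X1: "X (Suc n) = 1"
    using X by (simp_all add: legendre_interlacing_def)
  have sgn: "(-1) ^ (Suc n - i) * ?P (X i) > 0" if "i \<le> Suc n" for i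
    using legendre_Suc_sign_at_interlacing[OF n X that] .
  have Y_le_X: "Y i \<le> X i" and X_le_Y: "X i \<le> Y (Suc i)" if "i \<le> Suc n" for i
    using that Y[of i] Y[of "Suc i"] X0 X1 Y0 Y1 by (cases "i = 0"; cases "i = Suc n"; force)+
  have Yroots: "\<exists>j\<in>{1..Suc n}. x = Y j" if "?P x = 0" for x
  proof -
    have "inj_on Y {1..Suc n}"
      by (rule strict_mono_on_imp_inj_on, rule monotone_on_subset[OF Ymono]) auto
    then have "card (Y ` {1..Suc n}) = Suc n"
      by (simp add: card_image)
    then have "x \<in> Y ` {1..Suc n}"
      using degree_legendre_poly[of "Suc n"] Y that
      by (intro root_mem_if_degree_le_card[OF legendre_poly_nonzero]) (auto simp: poly_legendre_poly)
    then show ?thesis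
      by blast
  qed
  have "legendre_interlacing (Suc n) Y"
    unfolding legendre_interlacing_def
  proof (intro conjI ballI allI impI)
    show "Y 0 = -1" "Y (Suc (Suc n)) = 1" "strict_mono_on {..Suc (Suc n)} Y"
      by fact+
  next
    fix i assume i: "i \<in> {1..Suc n}"
    show "?P (Y i) = 0"
      using Y[OF i] by simp
    have "i - 1 \<le> n"
      using i by auto
    then have "\<forall>t\<in>{X (i - 1)<..<X (Suc (i - 1))}. (-1) ^ (n - (i - 1)) * legendre n t > 0"
      using X unfolding legendre_interlacing_def by blast
    moreover have "n - (i - 1) = Suc n - i" "Suc (i - 1) = i"
      using i by auto
    ultimately show "(-1) ^ (Suc n - i) * legendre (Suc n - 1) (Y i) > 0"
      using Y[OF i] by auto
  next
    fix i t assume i: "i \<le> Suc n" and t: "t \<in> {Y i<..<Y (Suc i)}"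
    have "?P t \<noteq> 0"
    proof
      assume "?P t = 0"
      then obtain j where "j \<in> {1..Suc n}" "t = Y j"
        using Yroots by blast
      with t i show False
        using strict_mono_on_leD[OF Ymono, of j i] strict_mono_on_leD[OF Ymono, of "Suc i" j]
        by (cases "j \<le> i") auto
    qed
    moreover have "?P (X i) \<noteq> 0"
      using sgn[OF i] by auto
    ultimately have "?P t * ?P (X i) > 0"
      using sign_const_between_consecutive_roots[OF Ymono i, of "legendre_poly (Suc n)" t "X i"]
        Yroots t Y_le_X[OF i] X_le_Y[OF i] by (auto simp: poly_legendre_poly)
    then show "(-1) ^ (Suc n - i) * ?P t > 0"
      using sgn[OF i] by (cases "even (Suc n - i)") (auto simp: zero_less_mult_iff)
  qed
  then show ?thesis
    by blast
qed

lemma legendre_interlacing_exists: "1 \<le> n \<Longrightarrow> \<exists>X. legendre_interlacing n X"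
proof (induction n rule: dec_induct)
  case base
  then show ?case
    using legendre_interlacing_1 by blast
next
  case (step n)
  then show ?case
    using legendre_interlacing_Suc by blast
qed

lemma finite_gl_nodes: "finite (gl_nodes l)"
proof -
  have "gl_nodes l \<subseteq> {x. poly (legendre_poly (Suc l)) x = 0}"
    by (auto simp: gl_nodes_def poly_legendre_poly)
  then show ?thesis
    using poly_roots_finite[OF legendre_poly_nonzero] finite_subset by blast
qed

lemma card_gl_nodes: "card (gl_nodes l) = Suc l"
proof (rule antisym)
  have "card (gl_nodes l) \<le> card {x. poly (legendre_poly (Suc l)) x = 0}"
    by (intro card_mono poly_roots_finite legendre_poly_nonzero) (auto simp: gl_nodes_def poly_legendre_poly)
  also have "\<dots> \<le> Suc l"
    using card_poly_roots_bound[OF legendre_poly_nonzero] degree_legendre_poly order_trans by blast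
  finally show "card (gl_nodes l) \<le> Suc l" .
  obtain X where X: "legendre_interlacing (Suc l) X"
    using legendre_interlacing_exists[of "Suc l"] by auto
  then have mono: "strict_mono_on {..Suc (Suc l)} X" and ends: "X 0 = -1" "X (Suc (Suc l)) = 1"
    and roots: "\<forall>i\<in>{1..Suc l}. legendre (Suc l) (X i) = 0 \<and> (-1) ^ (Suc l - i) * legendre l (X i) > 0"
    by (simp_all add: legendre_interlacing_def)
  have "X ` {1..Suc l} \<subseteq> gl_nodes l"
  proof
    fix x assume "x \<in> X ` {1..Suc l}"
    then obtain i where i: "i \<in> {1..Suc l}" "x = X i"
      by blast
    have "X 0 < X i" "X i < X (Suc (Suc l))"
      using strict_mono_onD[OF mono] i by auto
    then show "x \<in> gl_nodes l"
      using ends roots i unfolding gl_nodes_def by force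
  qed
  moreover have "inj_on X {1..Suc l}"
    by (rule strict_mono_on_imp_inj_on, rule monotone_on_subset[OF mono]) auto
  then have "card (X ` {1..Suc l}) = Suc l"
    by (simp add: card_image)
  ultimately show "Suc l \<le> card (gl_nodes l)"
    using card_mono[OF finite_gl_nodes] by metis
qed

lemma abs_le_1_if_gl_node: "t \<in> gl_nodes l \<Longrightarrow> \<bar>t\<bar> \<le> 1"
  by (auto simp: gl_nodes_def)

section \<open>Bivariate polynomials\<close>

text \<open>A bivariate polynomial is encoded as a polynomial in \<open>w\<close> whose coefficients are polynomials in \<open>s\<close>.\<close>
definition bpoly :: "real poly poly \<Rightarrow> real \<Rightarrow> real \<Rightarrow> real" where
  "bpoly Q s w = poly (poly Q [:w:]) s"

lemma bpoly_pCons [simp]: "bpoly (pCons c Q) s w = poly c s + w * bpoly Q s w"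
  by (simp add: bpoly_def)

lemma bpoly_0 [simp]: "bpoly 0 s w = 0"
  by (simp add: bpoly_def)

lemma bpoly_1 [simp]: "bpoly 1 s w = 1"
  by (simp add: bpoly_def)

lemma bpoly_add [simp]: "bpoly (P + Q) s w = bpoly P s w + bpoly Q s w"
  by (simp add: bpoly_def)

lemma bpoly_mult [simp]: "bpoly (P * Q) s w = bpoly P s w * bpoly Q s w"
  by (simp add: bpoly_def)

lemma bpoly_power [simp]: "bpoly (P ^ n) s w = bpoly P s w ^ n"
  by (induction n) auto

lemma bpoly_smult [simp]: "bpoly (smult p Q) s w = poly p s * bpoly Q s w"
  by (simp add: bpoly_def)

lemma bpoly_sum: "bpoly (\<Sum>i\<in>A. P i) s w = (\<Sum>i\<in>A. bpoly (P i) s w)"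
  by (simp add: bpoly_def poly_sum)

lemma bpoly_eq_sum_coeff:
  assumes "degree Q \<le> N"
  shows "bpoly Q s w = (\<Sum>n\<le>N. poly (coeff Q n) s * w ^ n)"
proof -
  have "poly Q [:w:] = (\<Sum>i\<le>degree Q. coeff Q i * [:w:] ^ i)"
    by (rule poly_altdef)
  also have "\<dots> = (\<Sum>i\<le>N. coeff Q i * [:w:] ^ i)"
    by (rule sum.mono_neutral_left) (use assms le_degree in auto)
  finally show ?thesis
    by (simp add: bpoly_def poly_sum poly_power mult.commute)
qed

lemma poly_pochhammer: "poly (pochhammer p j) s = pochhammer (poly p s) j"
  by (induction j) (simp_all add: pochhammer_Suc)

lemma bpoly_higher_pderiv:
  assumes "degree Q \<le> N"
  shows "bpoly ((pderiv ^^ j) Q) s w =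
           (\<Sum>n\<le>N. pochhammer (real (Suc n)) j * poly (coeff Q (n + j)) s * w ^ n)"
proof -
  have "degree ((pderiv ^^ j) Q) \<le> N"
    using assms by (induction j) (auto simp: degree_pderiv)
  then show ?thesis
    by (simp add: bpoly_eq_sum_coeff coeff_higher_pderiv poly_pochhammer)
qed

lemma abs_bpoly_le:
  assumes "degree Q \<le> k" "\<bar>w\<bar> \<le> R"
  shows "\<bar>bpoly Q s w\<bar> \<le> (\<Sum>b\<le>k. \<bar>poly (coeff Q b) s\<bar> * R ^ b)"
proof -
  have "\<bar>bpoly Q s w\<bar> \<le> (\<Sum>b\<le>k. \<bar>poly (coeff Q b) s\<bar> * \<bar>w\<bar> ^ b)"
    unfolding bpoly_eq_sum_coeff[OF assms(1)] by (rule order_trans[OF sum_abs]) (simp add: abs_mult power_abs)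
  also have "\<dots> \<le> (\<Sum>b\<le>k. \<bar>poly (coeff Q b) s\<bar> * R ^ b)"
    using assms(2) by (intro sum_mono mult_left_mono power_mono) auto
  finally show ?thesis .
qed

definition total_degree_le :: "nat \<Rightarrow> real poly poly \<Rightarrow> bool" where
  "total_degree_le k Q \<longleftrightarrow> (\<forall>b. coeff Q b = 0 \<or> degree (coeff Q b) + b \<le> k)"

lemma total_degree_le_coeff_eq_0: "total_degree_le k Q \<Longrightarrow> k < b \<Longrightarrow> coeff Q b = 0"
  unfolding total_degree_le_def by force

lemma total_degree_le_degree: "total_degree_le k Q \<Longrightarrow> degree Q \<le> k"
  using total_degree_le_coeff_eq_0 by (intro degree_le) blast

lemma total_degree_le_degree_coeff:
  assumes "total_degree_le k Q"
  shows "degree (coeff Q b) \<le> k - b"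
proof (cases "coeff Q b = 0")
  case False
  with assms have "degree (coeff Q b) + b \<le> k"
    unfolding total_degree_le_def by blast
  then show ?thesis
    by arith
qed simp

lemma total_degree_le_mono: "total_degree_le k Q \<Longrightarrow> k \<le> k' \<Longrightarrow> total_degree_le k' Q"
  unfolding total_degree_le_def by force

lemma total_degree_le_add:
  assumes "total_degree_le k P" "total_degree_le k Q"
  shows "total_degree_le k (P + Q)"
  unfolding total_degree_le_def
proof
  fix b
  show "coeff (P + Q) b = 0 \<or> degree (coeff (P + Q) b) + b \<le> k"
  proof (cases "b \<le> k")
    case True
    have "degree (coeff (P + Q) b) \<le> k - b"
      using degree_add_le_max[of "coeff P b" "coeff Q b"] assms
        total_degree_le_degree_coeff[of k P b] total_degree_le_degree_coeff[of k Q b] by simp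
    with True show ?thesis
      by arith
  qed (use assms total_degree_le_coeff_eq_0 in simp)
qed

lemma total_degree_le_sum:
  "finite A \<Longrightarrow> (\<And>i. i \<in> A \<Longrightarrow> total_degree_le k (P i)) \<Longrightarrow> total_degree_le k (\<Sum>i\<in>A. P i)"
  by (induction A rule: finite_induct) (auto simp: total_degree_le_add, simp add: total_degree_le_def)

lemma total_degree_le_mult:
  assumes P: "total_degree_le k1 P" and Q: "total_degree_le k2 Q"
  shows "total_degree_le (k1 + k2) (P * Q)"
  unfolding total_degree_le_def
proof
  fix n
  show "coeff (P * Q) n = 0 \<or> degree (coeff (P * Q) n) + n \<le> k1 + k2"
  proof (cases "n \<le> k1 + k2")
    case False
    have "coeff P i * coeff Q (n - i) = 0" if "i \<le> n" for i
      using total_degree_le_coeff_eq_0[OF P, of i] total_degree_le_coeff_eq_0[OF Q, of "n - i"] False that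
      by force
    then have "coeff (P * Q) n = 0"
      unfolding coeff_mult by (intro sum.neutral) auto
    then show ?thesis
      by simp
  next
    case True
    have "degree (coeff P i * coeff Q (n - i)) \<le> k1 + k2 - n" if "i \<le> n" for i
    proof (cases "coeff P i = 0 \<or> coeff Q (n - i) = 0")
      case False
      then have "degree (coeff P i) + i \<le> k1" "degree (coeff Q (n - i)) + (n - i) \<le> k2"
        using P Q unfolding total_degree_le_def by blast+
      then show ?thesis
        using degree_mult_le[of "coeff P i" "coeff Q (n - i)"] that by linarith
    qed auto
    then have "degree (coeff (P * Q) n) \<le> k1 + k2 - n"
      unfolding coeff_mult by (intro degree_sum_le) auto
    with True show ?thesis
      by arith
  qed
qed

lemma total_degree_le_const: "total_degree_le 0 [:[:c:]:]"
  by (simp add: total_degree_le_def coeff_pCons split: nat.splits)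

lemma total_degree_le_power: "total_degree_le k P \<Longrightarrow> total_degree_le (k * n) (P ^ n)"
proof (induction n)
  case 0
  then show ?case
    using total_degree_le_const[of 1] by (simp add: one_pCons)
next
  case (Suc n)
  then show ?case
    using total_degree_le_mult[of k P "k * n" "P ^ n"] by (simp add: add.commute)
qed

lemma total_degree_le_affine: "total_degree_le 1 [:[:\<alpha>, \<beta>:], [:\<gamma>:]:]"
  unfolding total_degree_le_def
proof
  fix b :: nat
  show "coeff [:[:\<alpha>, \<beta>:], [:\<gamma>:]:] b = 0 \<or> degree (coeff [:[:\<alpha>, \<beta>:], [:\<gamma>:]:] b) + b \<le> 1"
    by (cases b) (auto simp: coeff_pCons split: nat.splits)
qed

section \<open>Interpolation estimates at perturbed nodes\<close>

lemma abs_poly_le_coeff_sum: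
  fixes q :: "real poly"
  assumes "degree q \<le> d" "1 + \<bar>s\<bar> \<le> \<rho>"
  shows "\<bar>poly q s\<bar> \<le> (\<Sum>i\<le>d. \<bar>coeff q i\<bar>) * \<rho> ^ d"
proof -
  have "poly q s = (\<Sum>i\<le>degree q. coeff q i * s ^ i)"
    by (rule poly_altdef)
  also have "\<dots> = (\<Sum>i\<le>d. coeff q i * s ^ i)"
    by (rule sum.mono_neutral_left) (use assms le_degree in auto)
  finally have "\<bar>poly q s\<bar> \<le> (\<Sum>i\<le>d. \<bar>coeff q i * s ^ i\<bar>)"
    by (simp add: sum_abs)
  also have "\<dots> \<le> (\<Sum>i\<le>d. \<bar>coeff q i\<bar> * \<rho> ^ d)"
  proof (rule sum_mono)
    fix i assume "i \<in> {..d}"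
    have "\<bar>s\<bar> ^ i \<le> \<rho> ^ i"
      using assms(2) by (intro power_mono) auto
    also have "\<dots> \<le> \<rho> ^ d"
      using \<open>i \<in> {..d}\<close> assms(2) by (intro power_increasing) auto
    finally show "\<bar>coeff q i * s ^ i\<bar> \<le> \<bar>coeff q i\<bar> * \<rho> ^ d"
      by (simp add: abs_mult power_abs mult_left_mono)
  qed
  also have "\<dots> = (\<Sum>i\<le>d. \<bar>coeff q i\<bar>) * \<rho> ^ d"
    by (simp add: sum_distrib_right)
  finally show ?thesis .
qed

lemma abs_pderiv_le_coeff_sum:
  fixes q :: "real poly"
  assumes "degree q \<le> d" "1 + \<bar>s\<bar> \<le> \<rho>"
  shows "\<rho> * \<bar>poly (pderiv q) s\<bar> \<le> (\<Sum>i\<le>d. \<bar>coeff (pderiv q) i\<bar>) * \<rho> ^ d"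
proof (cases d)
  case 0
  with assms(1) have "pderiv q = 0"
    by (simp add: pderiv_eq_0_iff)
  then show ?thesis
    by simp
next
  case (Suc e)
  have "\<bar>poly (pderiv q) s\<bar> \<le> (\<Sum>i\<le>e. \<bar>coeff (pderiv q) i\<bar>) * \<rho> ^ e"
    using assms Suc by (intro abs_poly_le_coeff_sum) (auto simp: degree_pderiv)
  also have "\<dots> \<le> (\<Sum>i\<le>d. \<bar>coeff (pderiv q) i\<bar>) * \<rho> ^ e"
    using Suc assms(2) by (intro mult_right_mono sum_mono2) auto
  finally show ?thesis
    using assms(2) Suc by (simp add: mult_left_mono mult.left_commute)
qed

lemma lagrange_basis_exists:
  fixes S :: "real set"
  assumes fin: "finite S" and card: "card S = Suc n"
  obtains L where "\<And>t. t \<in> S \<Longrightarrow> degree (L t) \<le> n"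
    and "\<And>p. degree p \<le> n \<Longrightarrow> p = (\<Sum>t\<in>S. smult (poly p t) (L t))"
proof
  define L where "L t = (\<Prod>u\<in>S - {t}. smult (1 / (t - u)) [:-u, 1:])" for t
  show degL: "degree (L t) \<le> n" if "t \<in> S" for t
  proof -
    have "degree (L t) \<le> (\<Sum>u\<in>S - {t}. degree (smult (1 / (t - u)) [:-u, 1:]))"
      unfolding L_def by (rule degree_prod_sum_le[of "S - {t}", unfolded comp_def]) (simp add: fin)
    also have "\<dots> \<le> (\<Sum>u\<in>S - {t}. 1)"
      by (intro sum_mono) (simp add: order_trans[OF degree_smult_le])
    also have "\<dots> = n"
      using card that fin by simp
    finally show ?thesis .
  qed
  have poly_L: "poly (L t) t' = (if t' = t then 1 else 0)" if "t \<in> S" "t' \<in> S" for t t'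
  proof (cases "t' = t")
    case True
    have "(\<Prod>u\<in>S - {t}. poly (smult (1 / (t - u)) [:-u, 1:]) t) = (\<Prod>u\<in>S - {t}. 1)"
      by (intro prod.cong) (auto simp flip: diff_divide_distrib)
    with True show ?thesis
      by (simp add: L_def poly_prod del: poly_smult)
  next
    case False
    then have "t' \<in> S - {t}"
      using that by auto
    then have "(\<Prod>u\<in>S - {t}. poly (smult (1 / (t - u)) [:-u, 1:]) t') = 0"
      using fin by (intro prod_zero) auto
    with False show ?thesis
      by (simp add: L_def poly_prod)
  qed
  fix p :: "real poly" assume p: "degree p \<le> n"
  show "p = (\<Sum>t\<in>S. smult (poly p t) (L t))"
  proof (rule poly_eqI_degree[of S])
    fix x assume x: "x \<in> S"
    have "poly (\<Sum>t\<in>S. smult (poly p t) (L t)) x = (\<Sum>t\<in>S. poly p t * (if x = t then 1 else 0))"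
      using x by (simp add: poly_sum poly_L cong: sum.cong)
    also have "\<dots> = poly p x"
      using fin x by (simp add: if_distrib cong: if_cong)
    finally show "poly p x = poly (\<Sum>t\<in>S. smult (poly p t) (L t)) x"
      by simp
  next
    show "degree p < card S"
      using p card by simp
    have "degree (\<Sum>t\<in>S. smult (poly p t) (L t)) \<le> n"
      using fin by (intro degree_sum_le) (auto intro: order_trans[OF degree_smult_le] degL)
    then show "degree (\<Sum>t\<in>S. smult (poly p t) (L t)) < card S"
      using card by simp
  qed
qed

lemma lagrange_interpolation_bound:
  fixes S :: "real set"
  assumes "finite S" "card S = Suc n"
  shows "\<exists>K\<ge>0. \<forall>p s \<rho>. degree p \<le> n \<longrightarrow> 1 + \<bar>s\<bar> \<le> \<rho> \<longrightarrow>
           \<bar>poly p s\<bar> \<le> K * (\<Sum>t\<in>S. \<bar>poly p t\<bar>) * \<rho> ^ n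
         \<and> \<rho> * \<bar>poly (pderiv p) s\<bar> \<le> K * (\<Sum>t\<in>S. \<bar>poly p t\<bar>) * \<rho> ^ n"
proof -
  obtain L where degL: "\<And>t. t \<in> S \<Longrightarrow> degree (L t) \<le> n"
    and repr: "\<And>p. degree p \<le> n \<Longrightarrow> p = (\<Sum>t\<in>S. smult (poly p t) (L t))"
    using lagrange_basis_exists[OF assms] by blast
  define c where "c t = (\<Sum>i\<le>n. \<bar>coeff (L t) i\<bar>) + (\<Sum>i\<le>n. \<bar>coeff (pderiv (L t)) i\<bar>)" for t
  define K where "K = (\<Sum>t\<in>S. c t)"
  have c_nonneg: "0 \<le> (\<Sum>i\<le>n. \<bar>coeff (L t) i\<bar>)" "0 \<le> (\<Sum>i\<le>n. \<bar>coeff (pderiv (L t)) i\<bar>)" for t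
    by (auto intro: sum_nonneg)
  have coeff_sums_le_K: "(\<Sum>i\<le>n. \<bar>coeff (L t) i\<bar>) \<le> K" "(\<Sum>i\<le>n. \<bar>coeff (pderiv (L t)) i\<bar>) \<le> K"
    if "t \<in> S" for t
  proof -
    have "c t \<le> K"
      unfolding K_def using that assms(1) c_nonneg by (intro member_le_sum) (auto simp: c_def)
    then show "(\<Sum>i\<le>n. \<bar>coeff (L t) i\<bar>) \<le> K" "(\<Sum>i\<le>n. \<bar>coeff (pderiv (L t)) i\<bar>) \<le> K"
      using c_nonneg[of t] unfolding c_def by linarith+
  qed
  have K_nonneg: "K \<ge> 0"
    unfolding K_def c_def using c_nonneg by (intro sum_nonneg add_nonneg_nonneg) auto
  have combination: "\<bar>\<Sum>t\<in>S. poly p t * f t\<bar> \<le> K * (\<Sum>t\<in>S. \<bar>poly p t\<bar>) * \<rho> ^ n"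
    if "\<And>t. t \<in> S \<Longrightarrow> \<bar>f t\<bar> \<le> K * \<rho> ^ n" for p f and \<rho> :: real
  proof -
    have "\<bar>\<Sum>t\<in>S. poly p t * f t\<bar> \<le> (\<Sum>t\<in>S. \<bar>poly p t\<bar> * (K * \<rho> ^ n))"
      using that by (intro order_trans[OF sum_abs] sum_mono) (simp add: abs_mult mult_left_mono)
    then show ?thesis
      by (simp add: sum_distrib_left sum_distrib_right mult_ac)
  qed
  have "degree p \<le> n \<longrightarrow> 1 + \<bar>s\<bar> \<le> \<rho> \<longrightarrow>
          \<bar>poly p s\<bar> \<le> K * (\<Sum>t\<in>S. \<bar>poly p t\<bar>) * \<rho> ^ n
        \<and> \<rho> * \<bar>poly (pderiv p) s\<bar> \<le> K * (\<Sum>t\<in>S. \<bar>poly p t\<bar>) * \<rho> ^ n" for p s \<rho>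
  proof (intro impI conjI)
    assume p: "degree p \<le> n" and \<rho>: "1 + \<bar>s\<bar> \<le> \<rho>"
    have L_bound: "\<bar>poly (L t) s\<bar> \<le> K * \<rho> ^ n" if "t \<in> S" for t
    proof -
      have "\<bar>poly (L t) s\<bar> \<le> (\<Sum>i\<le>n. \<bar>coeff (L t) i\<bar>) * \<rho> ^ n"
        by (rule abs_poly_le_coeff_sum[OF degL[OF that] \<rho>])
      also have "\<dots> \<le> K * \<rho> ^ n"
        using coeff_sums_le_K[OF that] \<rho> by (intro mult_right_mono) auto
      finally show ?thesis .
    qed
    have "poly p s = (\<Sum>t\<in>S. poly p t * poly (L t) s)"
      by (subst repr[OF p]) (simp add: poly_sum)
    then show "\<bar>poly p s\<bar> \<le> K * (\<Sum>t\<in>S. \<bar>poly p t\<bar>) * \<rho> ^ n"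
      using combination[OF L_bound] by simp
    have L'_bound: "\<bar>\<rho> * poly (pderiv (L t)) s\<bar> \<le> K * \<rho> ^ n" if "t \<in> S" for t
    proof -
      have "\<bar>\<rho> * poly (pderiv (L t)) s\<bar> = \<rho> * \<bar>poly (pderiv (L t)) s\<bar>"
        using \<rho> by (simp add: abs_mult)
      also have "\<dots> \<le> (\<Sum>i\<le>n. \<bar>coeff (pderiv (L t)) i\<bar>) * \<rho> ^ n"
        by (rule abs_pderiv_le_coeff_sum[OF degL[OF that] \<rho>])
      also have "\<dots> \<le> K * \<rho> ^ n"
        using coeff_sums_le_K[OF that] \<rho> by (intro mult_right_mono) auto
      finally show ?thesis .
    qed
    have "pderiv p = (\<Sum>t\<in>S. smult (poly p t) (pderiv (L t)))"
      using arg_cong[OF repr[OF p], of pderiv] higher_pderiv_sum[of 1 "\<lambda>t. smult (poly p t) (L t)" S]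
      by (simp add: pderiv_smult)
    then have "\<rho> * poly (pderiv p) s = (\<Sum>t\<in>S. poly p t * (\<rho> * poly (pderiv (L t)) s))"
      by (simp add: poly_sum sum_distrib_left mult_ac)
    then have "\<bar>\<rho> * poly (pderiv p) s\<bar> \<le> K * (\<Sum>t\<in>S. \<bar>poly p t\<bar>) * \<rho> ^ n"
      using combination[OF L'_bound] by simp
    then show "\<rho> * \<bar>poly (pderiv p) s\<bar> \<le> K * (\<Sum>t\<in>S. \<bar>poly p t\<bar>) * \<rho> ^ n"
      using \<rho> by (simp add: abs_mult)
  qed
  with K_nonneg show ?thesis
    by blast
qed

lemma sum_powers_le:
  fixes c :: "nat \<Rightarrow> real"
  assumes "1 \<le> R" "0 \<le> M" "\<And>b. b \<le> k \<Longrightarrow> c b \<le> M * (2 * R) ^ (k - b)"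
  shows "(\<Sum>b\<le>k. c b * R ^ b) \<le> real (Suc k) * 2 ^ k * M * R ^ k"
proof -
  have "c b * R ^ b \<le> 2 ^ k * M * R ^ k" if "b \<le> k" for b
  proof -
    have "c b * R ^ b \<le> M * (2 * R) ^ (k - b) * R ^ b"
      using assms that by (intro mult_right_mono) auto
    also have "\<dots> = 2 ^ (k - b) * M * R ^ k"
      using that by (simp add: power_mult_distrib mult_ac flip: power_add)
    also have "\<dots> \<le> 2 ^ k * M * R ^ k"
      using assms by (intro mult_right_mono power_increasing) auto
    finally show ?thesis .
  qed
  then have "(\<Sum>b\<le>k. c b * R ^ b) \<le> (\<Sum>b\<le>k. 2 ^ k * M * R ^ k)"
    by (intro sum_mono) auto
  then show ?thesis
    by simp
qed

lemma abs_bpoly_le_of_coeff_bounds: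
  assumes "degree Q \<le> k" "1 \<le> R" "\<bar>w\<bar> \<le> R" "0 \<le> M"
    and "\<And>b. b \<le> k \<Longrightarrow> \<bar>poly (coeff Q b) s\<bar> \<le> M * (2 * R) ^ (k - b)"
  shows "\<bar>bpoly Q s w\<bar> \<le> real (Suc k) * 2 ^ k * M * R ^ k"
proof -
  have "\<bar>bpoly Q s w\<bar> \<le> (\<Sum>b\<le>k. \<bar>poly (coeff Q b) s\<bar> * R ^ b)"
    by (rule abs_bpoly_le[OF assms(1,3)])
  also have "\<dots> \<le> real (Suc k) * 2 ^ k * M * R ^ k"
    using assms(5) by (intro sum_powers_le[OF assms(2,4)])
  finally show ?thesis .
qed

lemma abs_bpoly_map_pderiv_le_of_coeff_bounds:
  assumes "degree Q \<le> k" "1 \<le> R" "\<bar>w\<bar> \<le> R" "0 \<le> M"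
    and "\<And>b. b \<le> k \<Longrightarrow> 2 * R * \<bar>poly (pderiv (coeff Q b)) s\<bar> \<le> M * (2 * R) ^ (k - b)"
  shows "R * \<bar>bpoly (map_poly pderiv Q) s w\<bar> \<le> real (Suc k) * 2 ^ k * M * R ^ k"
proof -
  have "degree (map_poly pderiv Q) \<le> k"
    using assms(1) map_poly_degree_leq order_trans by blast
  then have "\<bar>bpoly (map_poly pderiv Q) s w\<bar> \<le> (\<Sum>b\<le>k. \<bar>poly (coeff (map_poly pderiv Q) b) s\<bar> * R ^ b)"
    by (rule abs_bpoly_le[OF _ assms(3)])
  then have "R * \<bar>bpoly (map_poly pderiv Q) s w\<bar> \<le> R * (\<Sum>b\<le>k. \<bar>poly (pderiv (coeff Q b)) s\<bar> * R ^ b)"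
    using assms(2) by (intro mult_left_mono) (auto simp: coeff_map_poly)
  also have "\<dots> = (\<Sum>b\<le>k. R * \<bar>poly (pderiv (coeff Q b)) s\<bar> * R ^ b)"
    by (simp add: sum_distrib_left mult_ac)
  also have "\<dots> \<le> real (Suc k) * 2 ^ k * M * R ^ k"
    using assms(2,5) by (intro sum_powers_le[OF assms(2,4)] order_trans[OF _ assms(5)]) auto
  finally show ?thesis .
qed

lemma abs_bpoly_pderiv_le_of_coeff_bounds:
  assumes Q: "total_degree_le k Q" and R: "1 \<le> R" and "\<bar>w\<bar> \<le> R" "0 \<le> M"
    and coeff: "\<And>b. b \<le> k \<Longrightarrow> \<bar>poly (coeff Q b) s\<bar> \<le> M * (2 * R) ^ (k - b)"
  shows "R * \<bar>bpoly (pderiv Q) s w\<bar> \<le> real (Suc k) * 2 ^ k * (real (Suc k) * M) * R ^ k"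
proof -
  have "degree (pderiv Q) \<le> k"
    using total_degree_le_degree[OF Q] by (simp add: degree_pderiv)
  then have "\<bar>bpoly (pderiv Q) s w\<bar> \<le> (\<Sum>b\<le>k. \<bar>poly (coeff (pderiv Q) b) s\<bar> * R ^ b)"
    by (rule abs_bpoly_le[OF _ assms(3)])
  then have "R * \<bar>bpoly (pderiv Q) s w\<bar> \<le> R * (\<Sum>b\<le>k. real (Suc b) * \<bar>poly (coeff Q (Suc b)) s\<bar> * R ^ b)"
    using R by (intro mult_left_mono) (auto simp: coeff_pderiv abs_mult)
  also have "\<dots> = (\<Sum>b\<le>k. real (Suc b) * (R * \<bar>poly (coeff Q (Suc b)) s\<bar>) * R ^ b)"
    by (simp add: sum_distrib_left mult_ac)
  also have "\<dots> \<le> real (Suc k) * 2 ^ k * (real (Suc k) * M) * R ^ k"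
  proof (intro sum_powers_le[OF R] mult_nonneg_nonneg \<open>0 \<le> M\<close>)
    fix b assume b: "b \<le> k"
    have R_coeff: "R * \<bar>poly (coeff Q (Suc b)) s\<bar> \<le> M * (2 * R) ^ (k - b)"
    proof (cases "Suc b \<le> k")
      case True
      have "R * \<bar>poly (coeff Q (Suc b)) s\<bar> \<le> 2 * R * (M * (2 * R) ^ (k - Suc b))"
        using coeff[OF True] R by (intro mult_mono) auto
      also have "\<dots> = M * (2 * R) ^ Suc (k - Suc b)"
        by (simp add: mult_ac)
      also have "Suc (k - Suc b) = k - b"
        using True by simp
      finally show ?thesis .
    qed (use \<open>0 \<le> M\<close> R total_degree_le_coeff_eq_0[OF Q, of "Suc b"] in auto)
    have "real (Suc b) * (R * \<bar>poly (coeff Q (Suc b)) s\<bar>) \<le> real (Suc k) * (M * (2 * R) ^ (k - b))"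
      using b R by (intro mult_mono[OF _ R_coeff]) auto
    then show "real (Suc b) * (R * \<bar>poly (coeff Q (Suc b)) s\<bar>) \<le> real (Suc k) * M * (2 * R) ^ (k - b)"
      by (simp add: mult.assoc)
  qed auto
  finally show ?thesis .
qed

lemma abs_coeff_le_higher_pderiv:
  fixes Q :: "real poly poly"
  assumes "degree Q \<le> k" "\<bar>w\<bar> \<le> 2" "0 \<le> P"
    and poch: "\<And>n. n \<in> {1..k} \<Longrightarrow> pochhammer (real (Suc n)) j \<le> P"
    and coeff: "\<And>n. n \<in> {1..k} \<Longrightarrow> \<bar>poly (coeff Q (n + j)) t\<bar> \<le> c n"
  shows "\<bar>poly (coeff Q j) t\<bar> \<le> \<bar>bpoly ((pderiv ^^ j) Q) t w\<bar> + P * 2 ^ k * (\<Sum>n\<in>{1..k}. c n)"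
proof -
  have "{..k} = insert 0 {1..k}"
    by auto
  then have expansion: "bpoly ((pderiv ^^ j) Q) t w = fact j * poly (coeff Q j) t
      + (\<Sum>n\<in>{1..k}. pochhammer (real (Suc n)) j * poly (coeff Q (n + j)) t * w ^ n)"
    by (simp add: bpoly_higher_pderiv[OF assms(1)] pochhammer_fact)
  have "\<bar>pochhammer (real (Suc n)) j * poly (coeff Q (n + j)) t * w ^ n\<bar> \<le> P * c n * 2 ^ k"
    if n: "n \<in> {1..k}" for n
  proof -
    have "\<bar>w\<bar> ^ n \<le> 2 ^ k"
      using assms(2) n by (intro order_trans[OF power_mono power_increasing]) auto
    then show ?thesis
      using poch[OF n] coeff[OF n] abs_ge_zero[of "poly (coeff Q (n + j)) t"] \<open>0 \<le> P\<close>
      unfolding abs_mult power_abs by (intro mult_mono) (auto simp: pochhammer_nonneg)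
  qed
  then have "\<bar>\<Sum>n\<in>{1..k}. pochhammer (real (Suc n)) j * poly (coeff Q (n + j)) t * w ^ n\<bar>
      \<le> (\<Sum>n\<in>{1..k}. P * c n * 2 ^ k)"
    by (intro order_trans[OF sum_abs] sum_mono)
  also have "\<dots> = P * 2 ^ k * (\<Sum>n\<in>{1..k}. c n)"
    by (simp add: sum_distrib_left mult_ac)
  finally have "\<bar>\<Sum>n\<in>{1..k}. pochhammer (real (Suc n)) j * poly (coeff Q (n + j)) t * w ^ n\<bar>
      \<le> P * 2 ^ k * (\<Sum>n\<in>{1..k}. c n)" .
  moreover have "\<bar>poly (coeff Q j) t\<bar> \<le> \<bar>fact j * poly (coeff Q j) t\<bar>"
    by (simp add: abs_mult mult_le_cancel_right1)
  ultimately show ?thesis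
    using expansion by linarith
qed

locale node_sets =
  fixes S :: "nat \<Rightarrow> real set"
  assumes finite_nodes: "finite (S l)" and card_nodes: "card (S l) = Suc l"
    and abs_node_le_1: "t \<in> S l \<Longrightarrow> \<bar>t\<bar> \<le> 1"
begin

text \<open>The data of the estimate: \<open>\<delta> l t\<close> is the \<open>w\<close>-coordinate of the point above the node \<open>t \<in> S l\<close>,
  at which the \<open>w\<close>-derivative of order \<open>k - l\<close> is sampled.\<close>
definition node_data :: "nat \<Rightarrow> real poly poly \<Rightarrow> (nat \<Rightarrow> real \<Rightarrow> real) \<Rightarrow> real" where
  "node_data k Q \<delta> = (\<Sum>l\<le>k. \<Sum>t\<in>S l. \<bar>bpoly ((pderiv ^^ (k - l)) Q) t (\<delta> l t)\<bar>)"

definition coeff_node_sum :: "nat \<Rightarrow> real poly poly \<Rightarrow> nat \<Rightarrow> real" where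
  "coeff_node_sum k Q b = (\<Sum>t\<in>S (k - b). \<bar>poly (coeff Q b) t\<bar>)"

lemma node_data_nonneg: "node_data k Q \<delta> \<ge> 0"
  unfolding node_data_def by (intro sum_nonneg) auto

lemma coeff_node_sum_nonneg: "coeff_node_sum k Q b \<ge> 0"
  unfolding coeff_node_sum_def by (intro sum_nonneg) auto

lemma coeff_bound_by_node_sum:
  obtains K where "K \<ge> 0"
    and "\<And>Q b s \<rho>. total_degree_le k Q \<Longrightarrow> 1 + \<bar>s\<bar> \<le> \<rho> \<Longrightarrow>
           \<bar>poly (coeff Q b) s\<bar> \<le> K * coeff_node_sum k Q b * \<rho> ^ (k - b)
         \<and> \<rho> * \<bar>poly (pderiv (coeff Q b)) s\<bar> \<le> K * coeff_node_sum k Q b * \<rho> ^ (k - b)"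
proof -
  obtain K where K_nonneg: "\<And>l. K l \<ge> 0"
    and K: "\<And>l p s \<rho>. degree p \<le> l \<Longrightarrow> 1 + \<bar>s\<bar> \<le> \<rho> \<Longrightarrow>
              \<bar>poly p s\<bar> \<le> K l * (\<Sum>t\<in>S l. \<bar>poly p t\<bar>) * \<rho> ^ l
            \<and> \<rho> * \<bar>poly (pderiv p) s\<bar> \<le> K l * (\<Sum>t\<in>S l. \<bar>poly p t\<bar>) * \<rho> ^ l"
    using lagrange_interpolation_bound[OF finite_nodes card_nodes] by metis
  define K' where "K' = (\<Sum>l\<le>k. K l)"
  show ?thesis
  proof (rule that)
    show "0 \<le> K'"
      unfolding K'_def using K_nonneg by (simp add: sum_nonneg)
  next
    fix Q b and s \<rho> :: real assume Q: "total_degree_le k Q" and \<rho>: "1 + \<bar>s\<bar> \<le> \<rho>"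
    have "K (k - b) * coeff_node_sum k Q b * \<rho> ^ (k - b) \<le> K' * coeff_node_sum k Q b * \<rho> ^ (k - b)"
      unfolding K'_def using K_nonneg coeff_node_sum_nonneg \<rho>
      by (intro mult_right_mono member_le_sum) auto
    moreover note K[OF total_degree_le_degree_coeff[OF Q] \<rho>, of b]
    ultimately show "\<bar>poly (coeff Q b) s\<bar> \<le> K' * coeff_node_sum k Q b * \<rho> ^ (k - b)
        \<and> \<rho> * \<bar>poly (pderiv (coeff Q b)) s\<bar> \<le> K' * coeff_node_sum k Q b * \<rho> ^ (k - b)"
      by (simp add: coeff_node_sum_def)
  qed
qed

lemma coeff_node_sum_recursion:
  obtains A where "A \<ge> 0"
    and "\<And>Q \<delta> j. total_degree_le k Q \<Longrightarrow> (\<forall>l\<le>k. \<forall>t\<in>S l. \<bar>\<delta> l t\<bar> \<le> 2) \<Longrightarrow> j \<le> k \<Longrightarrow>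
           coeff_node_sum k Q j \<le> node_data k Q \<delta> + A * (\<Sum>n\<in>{1..k}. coeff_node_sum k Q (n + j))"
proof -
  obtain K where K_nonneg: "K \<ge> 0"
    and K: "\<And>Q b s \<rho>. total_degree_le k Q \<Longrightarrow> 1 + \<bar>s\<bar> \<le> \<rho> \<Longrightarrow>
              \<bar>poly (coeff Q b) s\<bar> \<le> K * coeff_node_sum k Q b * \<rho> ^ (k - b)
            \<and> \<rho> * \<bar>poly (pderiv (coeff Q b)) s\<bar> \<le> K * coeff_node_sum k Q b * \<rho> ^ (k - b)"
    by (rule coeff_bound_by_node_sum[of k]) blast
  define P where "P = (\<Sum>n\<le>k. \<Sum>j\<le>k. pochhammer (real (Suc n)) j)"
  have pochhammer_le: "pochhammer (real (Suc n)) j \<le> P" if "n \<le> k" "j \<le> k" for n j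
  proof -
    have "pochhammer (real (Suc n)) j \<le> (\<Sum>j\<le>k. pochhammer (real (Suc n)) j)"
      using that by (intro member_le_sum) (auto intro: pochhammer_nonneg)
    also have "\<dots> \<le> P"
      unfolding P_def using that by (intro member_le_sum sum_nonneg) (auto intro: pochhammer_nonneg)
    finally show ?thesis .
  qed
  have P_nonneg: "P \<ge> 0"
    unfolding P_def by (auto intro!: sum_nonneg pochhammer_nonneg)
  define A where "A = real (Suc k) * P * K * 2 ^ k * 2 ^ k"
  show ?thesis
  proof (rule that)
    show "A \<ge> 0"
      unfolding A_def using K_nonneg P_nonneg by simp
  next
    fix Q and \<delta> :: "nat \<Rightarrow> real \<Rightarrow> real" and j
    assume Q: "total_degree_le k Q" and \<delta>: "\<forall>l\<le>k. \<forall>t\<in>S l. \<bar>\<delta> l t\<bar> \<le> 2" and j: "j \<le> k"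
    define l where "l = k - j"
    define rest where "rest = P * 2 ^ k * (\<Sum>n\<in>{1..k}. K * coeff_node_sum k Q (n + j) * 2 ^ k)"
    have at_node: "\<bar>poly (coeff Q j) t\<bar> \<le> \<bar>bpoly ((pderiv ^^ j) Q) t (\<delta> l t)\<bar> + rest"
      if t: "t \<in> S l" for t
      unfolding rest_def
    proof (rule abs_coeff_le_higher_pderiv[OF total_degree_le_degree[OF Q] _ P_nonneg])
      show "\<bar>\<delta> l t\<bar> \<le> 2"
        using \<delta> t unfolding l_def by auto
      fix n assume n: "n \<in> {1..k}"
      show "pochhammer (real (Suc n)) j \<le> P"
        using pochhammer_le n j by auto
      have "\<bar>poly (coeff Q (n + j)) t\<bar> \<le> K * coeff_node_sum k Q (n + j) * 2 ^ (k - (n + j))"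
        using K[OF Q, where b = "n + j" and s = t and \<rho> = 2, THEN conjunct1] abs_node_le_1[OF t] by simp
      also have "\<dots> \<le> K * coeff_node_sum k Q (n + j) * 2 ^ k"
        using K_nonneg coeff_node_sum_nonneg by (intro mult_left_mono power_increasing) auto
      finally show "\<bar>poly (coeff Q (n + j)) t\<bar> \<le> K * coeff_node_sum k Q (n + j) * 2 ^ k" .
    qed
    have "coeff_node_sum k Q j \<le> (\<Sum>t\<in>S l. \<bar>bpoly ((pderiv ^^ j) Q) t (\<delta> l t)\<bar> + rest)"
      unfolding coeff_node_sum_def l_def[symmetric] using at_node by (intro sum_mono)
    also have "\<dots> = (\<Sum>t\<in>S l. \<bar>bpoly ((pderiv ^^ (k - l)) Q) t (\<delta> l t)\<bar>) + real (Suc l) * rest"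
      using j by (simp add: sum.distrib card_nodes l_def)
    also have "\<dots> \<le> node_data k Q \<delta> + real (Suc k) * rest"
    proof (rule add_mono)
      show "(\<Sum>t\<in>S l. \<bar>bpoly ((pderiv ^^ (k - l)) Q) t (\<delta> l t)\<bar>) \<le> node_data k Q \<delta>"
        unfolding node_data_def l_def by (intro member_le_sum[where f = "\<lambda>l. \<Sum>t\<in>S l. _ l t"] sum_nonneg) auto
      show "real (Suc l) * rest \<le> real (Suc k) * rest"
        unfolding rest_def l_def using K_nonneg P_nonneg coeff_node_sum_nonneg
        by (intro mult_right_mono mult_nonneg_nonneg sum_nonneg) auto
    qed
    finally show "coeff_node_sum k Q j \<le> node_data k Q \<delta> + A * (\<Sum>n\<in>{1..k}. coeff_node_sum k Q (n + j))"
      by (simp add: A_def rest_def sum_distrib_left mult_ac)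
  qed
qed

lemma coeff_node_sum_le_node_data:
  obtains C where "C \<ge> 0"
    and "\<And>Q \<delta> b. total_degree_le k Q \<Longrightarrow> (\<forall>l\<le>k. \<forall>t\<in>S l. \<bar>\<delta> l t\<bar> \<le> 2) \<Longrightarrow>
           coeff_node_sum k Q b \<le> C * node_data k Q \<delta>"
proof -
  obtain A where A_nonneg: "A \<ge> 0"
    and A: "\<And>Q \<delta> j. total_degree_le k Q \<Longrightarrow> (\<forall>l\<le>k. \<forall>t\<in>S l. \<bar>\<delta> l t\<bar> \<le> 2) \<Longrightarrow> j \<le> k \<Longrightarrow>
              coeff_node_sum k Q j \<le> node_data k Q \<delta> + A * (\<Sum>n\<in>{1..k}. coeff_node_sum k Q (n + j))"
    by (rule coeff_node_sum_recursion[of k]) blast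
  \<comment> \<open>downward induction on \<open>b\<close>: the recursion only involves coefficients of higher index\<close>
  have "\<exists>C\<ge>0. \<forall>Q \<delta> b. total_degree_le k Q \<longrightarrow> (\<forall>l\<le>k. \<forall>t\<in>S l. \<bar>\<delta> l t\<bar> \<le> 2) \<longrightarrow> k < b + m \<longrightarrow>
          coeff_node_sum k Q b \<le> C * node_data k Q \<delta>" for m
  proof (induction m)
    case 0
    show ?case
      by (intro exI[of _ 0]) (simp add: coeff_node_sum_def total_degree_le_coeff_eq_0)
  next
    case (Suc m)
    then obtain C where C_nonneg: "C \<ge> 0"
      and C: "\<And>Q \<delta> b. total_degree_le k Q \<Longrightarrow> (\<forall>l\<le>k. \<forall>t\<in>S l. \<bar>\<delta> l t\<bar> \<le> 2) \<Longrightarrow> k < b + m \<Longrightarrow>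
                coeff_node_sum k Q b \<le> C * node_data k Q \<delta>"
      by blast
    define C' where "C' = C + 1 + A * k * C"
    have "coeff_node_sum k Q b \<le> C' * node_data k Q \<delta>"
      if Q: "total_degree_le k Q" and \<delta>: "\<forall>l\<le>k. \<forall>t\<in>S l. \<bar>\<delta> l t\<bar> \<le> 2" and b: "k < b + Suc m"
      for Q and \<delta> :: "nat \<Rightarrow> real \<Rightarrow> real" and b
    proof (cases "k < b + m")
      case True
      have "C \<le> C'"
        unfolding C'_def using A_nonneg C_nonneg by simp
      then have "C * node_data k Q \<delta> \<le> C' * node_data k Q \<delta>"
        using node_data_nonneg by (rule mult_right_mono)
      with C[OF Q \<delta> True] show ?thesis
        by linarith
    next
      case False
      have "(\<Sum>n\<in>{1..k}. coeff_node_sum k Q (n + b)) \<le> (\<Sum>n\<in>{1..k}. C * node_data k Q \<delta>)"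
        using False b by (intro sum_mono C[OF Q \<delta>]) auto
      then have "A * (\<Sum>n\<in>{1..k}. coeff_node_sum k Q (n + b)) \<le> A * k * C * node_data k Q \<delta>"
        using A_nonneg by (simp add: mult_left_mono mult_ac)
      moreover have "coeff_node_sum k Q b \<le> node_data k Q \<delta> + A * (\<Sum>n\<in>{1..k}. coeff_node_sum k Q (n + b))"
        using False b by (intro A[OF Q \<delta>]) auto
      moreover have "0 \<le> C * node_data k Q \<delta>"
        using C_nonneg node_data_nonneg by simp
      ultimately show ?thesis
        unfolding C'_def by (simp add: algebra_simps)
    qed
    moreover have "C' \<ge> 0"
      unfolding C'_def using A_nonneg C_nonneg by simp
    ultimately show ?case
      by blast
  qed
  from this[of "Suc k"] obtain C where "C \<ge> 0"
    and "\<forall>Q \<delta> b. total_degree_le k Q \<longrightarrow> (\<forall>l\<le>k. \<forall>t\<in>S l. \<bar>\<delta> l t\<bar> \<le> 2) \<longrightarrow> k < b + Suc k \<longrightarrow>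
           coeff_node_sum k Q b \<le> C * node_data k Q \<delta>"
    by blast
  then show ?thesis
    using that[of C] by auto
qed

lemma reference_estimate:
  obtains C where "C > 0"
    and "\<And>Q \<delta> R s w. total_degree_le k Q \<Longrightarrow> (\<forall>l\<le>k. \<forall>t\<in>S l. \<bar>\<delta> l t\<bar> \<le> 2) \<Longrightarrow>
           1 \<le> R \<Longrightarrow> \<bar>s\<bar> \<le> R \<Longrightarrow> \<bar>w\<bar> \<le> R \<Longrightarrow>
           \<bar>bpoly Q s w\<bar> \<le> C * R ^ k * node_data k Q \<delta>
         \<and> R * (\<bar>bpoly (map_poly pderiv Q) s w\<bar> + \<bar>bpoly (pderiv Q) s w\<bar>) \<le> C * R ^ k * node_data k Q \<delta>"
proof -
  obtain K where K_nonneg: "K \<ge> 0"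
    and K: "\<And>Q b s \<rho>. total_degree_le k Q \<Longrightarrow> 1 + \<bar>s\<bar> \<le> \<rho> \<Longrightarrow>
              \<bar>poly (coeff Q b) s\<bar> \<le> K * coeff_node_sum k Q b * \<rho> ^ (k - b)
            \<and> \<rho> * \<bar>poly (pderiv (coeff Q b)) s\<bar> \<le> K * coeff_node_sum k Q b * \<rho> ^ (k - b)"
    by (rule coeff_bound_by_node_sum[of k]) blast
  obtain C0 where C0_nonneg: "C0 \<ge> 0"
    and C0: "\<And>Q \<delta> b. total_degree_le k Q \<Longrightarrow> (\<forall>l\<le>k. \<forall>t\<in>S l. \<bar>\<delta> l t\<bar> \<le> 2) \<Longrightarrow>
               coeff_node_sum k Q b \<le> C0 * node_data k Q \<delta>"
    by (rule coeff_node_sum_le_node_data[of k]) blast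
  define C where "C = 2 * real (Suc k) ^ 2 * 2 ^ k * K * C0 + 1"
  show ?thesis
  proof (rule that)
    show "C > 0"
      unfolding C_def using K_nonneg C0_nonneg by (simp add: add_nonneg_pos)
  next
    fix Q and \<delta> :: "nat \<Rightarrow> real \<Rightarrow> real" and R s w :: real
    assume Q: "total_degree_le k Q" and \<delta>: "\<forall>l\<le>k. \<forall>t\<in>S l. \<bar>\<delta> l t\<bar> \<le> 2"
      and R: "1 \<le> R" and s: "\<bar>s\<bar> \<le> R" and w: "\<bar>w\<bar> \<le> R"
    define M where "M = K * C0 * node_data k Q \<delta>"
    have M_nonneg: "M \<ge> 0"
      unfolding M_def using K_nonneg C0_nonneg node_data_nonneg by simp
    have coeff_le: "\<bar>poly (coeff Q b) s\<bar> \<le> M * (2 * R) ^ (k - b)"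
      and deriv_coeff_le: "2 * R * \<bar>poly (pderiv (coeff Q b)) s\<bar> \<le> M * (2 * R) ^ (k - b)" for b
    proof -
      have "K * coeff_node_sum k Q b \<le> M"
        unfolding M_def using C0[OF Q \<delta>, of b] K_nonneg by (simp add: mult.assoc mult_left_mono)
      then have "K * coeff_node_sum k Q b * (2 * R) ^ (k - b) \<le> M * (2 * R) ^ (k - b)"
        using R by (intro mult_right_mono) auto
      moreover have "1 + \<bar>s\<bar> \<le> 2 * R"
        using R s by linarith
      ultimately show "\<bar>poly (coeff Q b) s\<bar> \<le> M * (2 * R) ^ (k - b)"
        and "2 * R * \<bar>poly (pderiv (coeff Q b)) s\<bar> \<le> M * (2 * R) ^ (k - b)"
        using K[OF Q] by (meson order_trans)+
    qed
    have degQ: "degree Q \<le> k"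
      using total_degree_le_degree[OF Q] .
    note value_bound = abs_bpoly_le_of_coeff_bounds[OF degQ R w M_nonneg coeff_le]
    note s_deriv = abs_bpoly_map_pderiv_le_of_coeff_bounds[OF degQ R w M_nonneg deriv_coeff_le]
    note w_deriv = abs_bpoly_pderiv_le_of_coeff_bounds[OF Q R w M_nonneg coeff_le]
    define X where "X = 2 ^ k * M * R ^ k"
    have X_nonneg: "X \<ge> 0"
      unfolding X_def using M_nonneg R by simp
    have "real (Suc k) * X \<le> real (Suc k) ^ 2 * X"
      using X_nonneg by (intro mult_right_mono) (auto simp: power2_eq_square)
    moreover have "C * R ^ k * node_data k Q \<delta> = 2 * real (Suc k) ^ 2 * X + R ^ k * node_data k Q \<delta>"
      unfolding C_def X_def M_def by (simp add: algebra_simps)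
    moreover have "0 \<le> R ^ k * node_data k Q \<delta>"
      using R node_data_nonneg by simp
    moreover have "\<bar>bpoly Q s w\<bar> \<le> real (Suc k) * X"
      using value_bound unfolding X_def by (simp add: mult_ac)
    moreover have "R * \<bar>bpoly (map_poly pderiv Q) s w\<bar> \<le> real (Suc k) * X"
      using s_deriv unfolding X_def by (simp add: mult_ac)
    moreover have "R * \<bar>bpoly (pderiv Q) s w\<bar> \<le> real (Suc k) ^ 2 * X"
      using w_deriv unfolding X_def by (simp add: power2_eq_square mult_ac)
    ultimately show "\<bar>bpoly Q s w\<bar> \<le> C * R ^ k * node_data k Q \<delta>
        \<and> R * (\<bar>bpoly (map_poly pderiv Q) s w\<bar> + \<bar>bpoly (pderiv Q) s w\<bar>) \<le> C * R ^ k * node_data k Q \<delta>"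
      unfolding distrib_left by linarith
  qed
qed

end

section \<open>Short chords of a smooth closed curve are flat\<close>

lemma inner_perturbed_ge:
  fixes v e r :: "'a::real_inner"
  assumes e: "norm e \<le> \<epsilon>" and r: "norm r \<le> \<bar>d\<bar> * \<epsilon>" and small: "8 * \<epsilon> \<le> norm v"
  shows "d\<^sup>2 * (norm v)\<^sup>2 / 2 \<le> d * ((v + e) \<bullet> (d *\<^sub>R v + r))"
proof -
  have \<epsilon>: "0 \<le> \<epsilon>"
    using e norm_ge_zero order_trans by blast
  have v\<epsilon>: "norm v * \<epsilon> \<le> (norm v)\<^sup>2 / 8"
    using mult_left_mono[OF small, of "norm v"] by (simp add: power2_eq_square)
  have \<epsilon>\<epsilon>: "\<epsilon> * \<epsilon> \<le> (norm v)\<^sup>2 / 8"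
    using v\<epsilon> mult_right_mono[OF small \<epsilon>] mult_nonneg_nonneg[OF norm_ge_zero \<epsilon>, of v]
    by (simp add: power2_eq_square mult.commute)
  have dd: "\<bar>d\<bar> * \<bar>d\<bar> = d\<^sup>2"
    by (simp add: power2_eq_square abs_mult_self_eq)
  have "\<bar>d * (v \<bullet> r)\<bar> \<le> \<bar>d\<bar> * (norm v * (\<bar>d\<bar> * \<epsilon>))"
    unfolding abs_mult using Cauchy_Schwarz_ineq2[of v r] r
    by (intro mult_left_mono order_trans[OF _ mult_left_mono[OF r]]) auto
  also have "\<dots> = d\<^sup>2 * (norm v * \<epsilon>)"
    by (simp flip: dd add: mult_ac)
  finally have 1: "\<bar>d * (v \<bullet> r)\<bar> \<le> d\<^sup>2 * ((norm v)\<^sup>2 / 8)"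
    using mult_left_mono[OF v\<epsilon>, of "d\<^sup>2"] by simp
  have "\<bar>e \<bullet> v\<bar> \<le> \<epsilon> * norm v"
    using Cauchy_Schwarz_ineq2[of e v] mult_right_mono[OF e, of "norm v"] by simp
  from mult_left_mono[OF this zero_le_power2[of d]]
  have "\<bar>d * (d * (e \<bullet> v))\<bar> \<le> d\<^sup>2 * (\<epsilon> * norm v)"
    by (simp add: abs_mult power2_eq_square abs_mult_self_eq mult.assoc)
  also have "\<dots> \<le> d\<^sup>2 * ((norm v)\<^sup>2 / 8)"
    using v\<epsilon> by (intro mult_left_mono) (simp_all only: mult.commute zero_le_power2)
  finally have 2: "\<bar>d * (d * (e \<bullet> v))\<bar> \<le> d\<^sup>2 * ((norm v)\<^sup>2 / 8)" .
  have "\<bar>e \<bullet> r\<bar> \<le> \<epsilon> * (\<bar>d\<bar> * \<epsilon>)"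
    using Cauchy_Schwarz_ineq2[of e r] mult_mono[OF e r \<epsilon> norm_ge_zero] by linarith
  from mult_left_mono[OF this abs_ge_zero[of d]]
  have "\<bar>d * (e \<bullet> r)\<bar> \<le> (\<bar>d\<bar> * \<bar>d\<bar>) * (\<epsilon> * \<epsilon>)"
    by (simp add: abs_mult mult_ac)
  then have 3: "\<bar>d * (e \<bullet> r)\<bar> \<le> d\<^sup>2 * ((norm v)\<^sup>2 / 8)"
    unfolding dd using mult_left_mono[OF \<epsilon>\<epsilon>, of "d\<^sup>2"] by simp
  have "d * ((v + e) \<bullet> (d *\<^sub>R v + r)) = d\<^sup>2 * (norm v)\<^sup>2 + d * (v \<bullet> r) + d * (d * (e \<bullet> v)) + d * (e \<bullet> r)"
    by (simp add: inner_add_left inner_add_right dot_square_norm power2_eq_square algebra_simps)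
  then show ?thesis
    using 1 2 3 by (simp add: abs_le_iff)
qed

lemma has_real_derivative_inner_vector:
  assumes "(\<gamma> has_vector_derivative v) (at s)"
  shows "((\<lambda>s. \<gamma> s \<bullet> c) has_real_derivative (v \<bullet> c)) (at s)"
  unfolding has_field_derivative_def
  by (rule has_derivative_eq_rhs[OF has_derivative_inner_left[OF assms[unfolded has_vector_derivative_def]]])
    (simp add: fun_eq_iff)

locale nearly_straight_arc =
  fixes \<gamma> \<gamma>' :: "real \<Rightarrow> real^2" and \<alpha> lam L :: real
  assumes has_derivative: "\<And>s. \<bar>s - \<alpha>\<bar> \<le> lam \<Longrightarrow> (\<gamma> has_vector_derivative \<gamma>' s) (at s)"
    and lipschitz: "\<And>a b. \<bar>a - \<alpha>\<bar> \<le> lam \<Longrightarrow> \<bar>b - \<alpha>\<bar> \<le> lam \<Longrightarrow> norm (\<gamma>' b - \<gamma>' a) \<le> L * \<bar>b - a\<bar>"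
    and L_nonneg: "0 \<le> L"
    and tangent_nonzero: "\<gamma>' \<alpha> \<noteq> 0"
    and short: "8 * (L * lam) \<le> norm (\<gamma>' \<alpha>)"
begin

lemma mean_value_inner:
  assumes "\<bar>a - \<alpha>\<bar> \<le> lam" "\<bar>b - \<alpha>\<bar> \<le> lam"
  obtains \<xi> where "min a b \<le> \<xi>" "\<xi> \<le> max a b" "(\<gamma> b - \<gamma> a) \<bullet> c = (b - a) * (\<gamma>' \<xi> \<bullet> c)"
proof (cases "a = b")
  case False
  have "\<exists>\<xi>. min a b < \<xi> \<and> \<xi> < max a b \<and>
      \<gamma> (max a b) \<bullet> c - \<gamma> (min a b) \<bullet> c = (max a b - min a b) * (\<gamma>' \<xi> \<bullet> c)"
  proof (rule MVT2)
    show "min a b < max a b"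
      using False by (simp add: min_def max_def)
    fix s assume "min a b \<le> s" "s \<le> max a b"
    with assms have "\<bar>s - \<alpha>\<bar> \<le> lam"
      by (auto simp: abs_le_iff min_def max_def split: if_splits)
    then show "((\<lambda>s. \<gamma> s \<bullet> c) has_real_derivative (\<gamma>' s \<bullet> c)) (at s)"
      by (intro has_real_derivative_inner_vector has_derivative)
  qed
  then obtain \<xi> where "min a b < \<xi>" "\<xi> < max a b"
    "\<gamma> (max a b) \<bullet> c - \<gamma> (min a b) \<bullet> c = (max a b - min a b) * (\<gamma>' \<xi> \<bullet> c)"
    by blast
  then show ?thesis
    using that[of \<xi>] by (cases "a \<le> b") (auto simp: min_def max_def inner_diff_left algebra_simps)
qed (use that in simp)

lemma derivative_near:
  assumes "\<bar>s - \<alpha>\<bar> \<le> lam"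
  shows "norm (\<gamma>' s - \<gamma>' \<alpha>) \<le> L * lam"
proof -
  have "norm (\<gamma>' s - \<gamma>' \<alpha>) \<le> L * \<bar>s - \<alpha>\<bar>"
    using lipschitz[of \<alpha> s] assms by simp
  also have "\<dots> \<le> L * lam"
    using assms L_nonneg by (intro mult_left_mono) auto
  finally show ?thesis .
qed

lemma chord_near_tangent:
  assumes "\<bar>\<beta> - \<alpha>\<bar> \<le> lam"
  shows "norm (\<gamma> \<beta> - \<gamma> \<alpha> - (\<beta> - \<alpha>) *\<^sub>R \<gamma>' \<alpha>) \<le> \<bar>\<beta> - \<alpha>\<bar> * (L * lam)"
proof -
  let ?J = "{\<alpha> - lam..\<alpha> + lam}"
  have J: "s \<in> ?J \<longleftrightarrow> \<bar>s - \<alpha>\<bar> \<le> lam" for s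
    by (auto simp: abs_le_iff)
  have "norm (\<gamma> \<beta> - \<gamma> \<alpha> - (\<beta> - \<alpha>) *\<^sub>R \<gamma>' \<alpha>) \<le> norm (\<beta> - \<alpha>) * (L * lam)"
  proof (rule vector_differentiable_bound_linearization[of ?J])
    show "\<And>s. s \<in> ?J \<Longrightarrow> (\<gamma> has_vector_derivative \<gamma>' s) (at s within ?J)"
      using has_derivative J has_vector_derivative_at_within by blast
    show "closed_segment \<alpha> \<beta> \<subseteq> ?J"
      using assms J by (intro closed_segment_subset) auto
    show "\<And>s. s \<in> ?J \<Longrightarrow> norm (\<gamma>' s - \<gamma>' \<alpha>) \<le> L * lam"
      using derivative_near J by blast
    show "\<alpha> \<in> ?J"
      using assms J by simp
  qed
  then show ?thesis
    by simp
qed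

lemma chord_derivative_sign:
  assumes "\<bar>\<beta> - \<alpha>\<bar> \<le> lam" "\<bar>s - \<alpha>\<bar> \<le> lam"
  shows "(\<beta> - \<alpha>)\<^sup>2 * (norm (\<gamma>' \<alpha>))\<^sup>2 / 2 \<le> (\<beta> - \<alpha>) * (\<gamma>' s \<bullet> (\<gamma> \<beta> - \<gamma> \<alpha>))"
  using inner_perturbed_ge[OF derivative_near[OF assms(2)] chord_near_tangent[OF assms(1)] short] by simp

lemma chord_length_ge:
  assumes "\<bar>\<beta> - \<alpha>\<bar> \<le> lam"
  shows "\<bar>\<beta> - \<alpha>\<bar> * norm (\<gamma>' \<alpha>) / 2 \<le> dist (\<gamma> \<alpha>) (\<gamma> \<beta>)"
proof -
  have "\<bar>\<beta> - \<alpha>\<bar> * norm (\<gamma>' \<alpha>) \<le> norm (\<gamma> \<beta> - \<gamma> \<alpha>) + \<bar>\<beta> - \<alpha>\<bar> * (L * lam)"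
    using norm_triangle_sub[of "(\<beta> - \<alpha>) *\<^sub>R \<gamma>' \<alpha>" "\<gamma> \<beta> - \<gamma> \<alpha>"] chord_near_tangent[OF assms]
    by (simp add: norm_minus_commute)
  moreover have "\<bar>\<beta> - \<alpha>\<bar> * (L * lam) \<le> \<bar>\<beta> - \<alpha>\<bar> * norm (\<gamma>' \<alpha>) / 8"
    using mult_left_mono[OF _ abs_ge_zero, of "L * lam" "norm (\<gamma>' \<alpha>) / 8" "\<beta> - \<alpha>"] short by simp
  ultimately show ?thesis
    unfolding dist_norm norm_minus_commute[of "\<gamma> \<alpha>"] using norm_ge_zero[of "\<gamma> \<beta> - \<gamma> \<alpha>"] by linarith
qed

lemma parameter_between:
  assumes \<beta>: "\<bar>\<beta> - \<alpha>\<bar> \<le> lam" and \<theta>: "\<bar>\<theta> - \<alpha>\<bar> \<le> lam" and "\<beta> \<noteq> \<alpha>"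
    and proj: "0 \<le> (\<gamma> \<theta> - \<gamma> \<alpha>) \<bullet> (\<gamma> \<beta> - \<gamma> \<alpha>)"
      "(\<gamma> \<theta> - \<gamma> \<alpha>) \<bullet> (\<gamma> \<beta> - \<gamma> \<alpha>) \<le> (\<gamma> \<beta> - \<gamma> \<alpha>) \<bullet> (\<gamma> \<beta> - \<gamma> \<alpha>)"
  shows "min \<alpha> \<beta> \<le> \<theta> \<and> \<theta> \<le> max \<alpha> \<beta>"
proof -
  let ?c = "\<gamma> \<beta> - \<gamma> \<alpha>"
  \<comment> \<open>the projection onto the chord is strictly monotone along the arc\<close>
  have monotone: "0 < (\<beta> - \<alpha>) * ((\<gamma> b - \<gamma> a) \<bullet> ?c)"
    if ab: "\<bar>a - \<alpha>\<bar> \<le> lam" "\<bar>b - \<alpha>\<bar> \<le> lam" "a < b" for a b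
  proof -
    obtain \<xi> where \<xi>: "min a b \<le> \<xi>" "\<xi> \<le> max a b" "(\<gamma> b - \<gamma> a) \<bullet> ?c = (b - a) * (\<gamma>' \<xi> \<bullet> ?c)"
      using mean_value_inner[OF ab(1,2)] by blast
    have "\<bar>\<xi> - \<alpha>\<bar> \<le> lam"
      using \<xi> ab by (auto simp: abs_le_iff min_def max_def split: if_splits)
    then have "(\<beta> - \<alpha>)\<^sup>2 * (norm (\<gamma>' \<alpha>))\<^sup>2 / 2 \<le> (\<beta> - \<alpha>) * (\<gamma>' \<xi> \<bullet> ?c)"
      by (rule chord_derivative_sign[OF \<beta>])
    moreover have "0 < (\<beta> - \<alpha>)\<^sup>2 * (norm (\<gamma>' \<alpha>))\<^sup>2 / 2"
      using \<open>\<beta> \<noteq> \<alpha>\<close> tangent_nonzero by simp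
    ultimately have "0 < (b - a) * ((\<beta> - \<alpha>) * (\<gamma>' \<xi> \<bullet> ?c))"
      using ab(3) by (simp add: mult_pos_pos)
    then show ?thesis
      unfolding \<xi>(3) by (simp add: mult.left_commute)
  qed
  have \<alpha>: "\<bar>\<alpha> - \<alpha>\<bar> \<le> lam"
    using \<beta> by simp
  show ?thesis
  proof (rule ccontr)
    assume "\<not> ?thesis"
    then consider "\<theta> < min \<alpha> \<beta>" | "max \<alpha> \<beta> < \<theta>"
      by linarith
    then show False
    proof cases
      case 1
      then have "0 < (\<beta> - \<alpha>) * ((\<gamma> \<alpha> - \<gamma> \<theta>) \<bullet> ?c)" "0 < (\<beta> - \<alpha>) * ((\<gamma> \<beta> - \<gamma> \<theta>) \<bullet> ?c)"
        using monotone[OF \<theta> \<alpha>] monotone[OF \<theta> \<beta>] by auto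
      with proj show False
        by (cases "\<alpha> < \<beta>") (auto simp: zero_less_mult_iff inner_diff_left)
    next
      case 2
      then have "0 < (\<beta> - \<alpha>) * ((\<gamma> \<theta> - \<gamma> \<alpha>) \<bullet> ?c)" "0 < (\<beta> - \<alpha>) * ((\<gamma> \<theta> - \<gamma> \<beta>) \<bullet> ?c)"
        using monotone[OF \<alpha> \<theta>] monotone[OF \<beta> \<theta>] by auto
      with proj show False
        by (cases "\<alpha> < \<beta>") (auto simp: zero_less_mult_iff inner_diff_left)
    qed
  qed
qed

lemma normal_deviation_le:
  assumes \<beta>: "\<bar>\<beta> - \<alpha>\<bar> \<le> lam" and \<theta>: "\<bar>\<theta> - \<alpha>\<bar> \<le> lam" and between: "min \<alpha> \<beta> \<le> \<theta>" "\<theta> \<le> max \<alpha> \<beta>"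
    and \<eta>: "\<eta> \<bullet> (\<gamma> \<beta> - \<gamma> \<alpha>) = 0" "norm \<eta> = 1"
  shows "\<bar>(\<gamma> \<theta> - \<gamma> \<alpha>) \<bullet> \<eta>\<bar> \<le> L * (\<beta> - \<alpha>)\<^sup>2"
proof (cases "\<beta> = \<alpha>")
  case False
  have \<alpha>: "\<bar>\<alpha> - \<alpha>\<bar> \<le> lam"
    using \<beta> by simp
  have in_J: "\<bar>s - \<alpha>\<bar> \<le> lam" if "min \<alpha> \<beta> \<le> s" "s \<le> max \<alpha> \<beta>" for s
    using that \<beta> by (auto simp: abs_le_iff min_def max_def split: if_splits)
  \<comment> \<open>by Rolle the tangent is parallel to the chord somewhere between \<open>\<alpha>\<close> and \<open>\<beta>\<close>\<close>
  obtain \<xi> where \<xi>: "min \<alpha> \<beta> \<le> \<xi>" "\<xi> \<le> max \<alpha> \<beta>" "(\<gamma> \<beta> - \<gamma> \<alpha>) \<bullet> \<eta> = (\<beta> - \<alpha>) * (\<gamma>' \<xi> \<bullet> \<eta>)"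
    using mean_value_inner[OF \<alpha> \<beta>] by blast
  then have "\<gamma>' \<xi> \<bullet> \<eta> = 0"
    using \<eta>(1) False by (simp add: inner_commute)
  have tangent_small: "\<bar>\<gamma>' s \<bullet> \<eta>\<bar> \<le> L * \<bar>\<beta> - \<alpha>\<bar>" if "min \<alpha> \<beta> \<le> s" "s \<le> max \<alpha> \<beta>" for s
  proof -
    have "\<bar>\<gamma>' s \<bullet> \<eta>\<bar> = \<bar>(\<gamma>' s - \<gamma>' \<xi>) \<bullet> \<eta>\<bar>"
      using \<open>\<gamma>' \<xi> \<bullet> \<eta> = 0\<close> by (simp add: inner_diff_left)
    also have "\<dots> \<le> norm (\<gamma>' s - \<gamma>' \<xi>)"
      using Cauchy_Schwarz_ineq2[of "\<gamma>' s - \<gamma>' \<xi>" \<eta>] \<eta>(2) by simp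
    also have "\<dots> \<le> L * \<bar>s - \<xi>\<bar>"
      using lipschitz[OF in_J[OF \<xi>(1,2)] in_J[OF that]] .
    also have "\<dots> \<le> L * \<bar>\<beta> - \<alpha>\<bar>"
      using that \<xi> L_nonneg by (intro mult_left_mono) (auto simp: min_def max_def split: if_splits)
    finally show ?thesis .
  qed
  obtain \<zeta> where \<zeta>: "min \<alpha> \<theta> \<le> \<zeta>" "\<zeta> \<le> max \<alpha> \<theta>" "(\<gamma> \<theta> - \<gamma> \<alpha>) \<bullet> \<eta> = (\<theta> - \<alpha>) * (\<gamma>' \<zeta> \<bullet> \<eta>)"
    using mean_value_inner[OF \<alpha> \<theta>] by blast
  have "\<bar>(\<gamma> \<theta> - \<gamma> \<alpha>) \<bullet> \<eta>\<bar> = \<bar>\<theta> - \<alpha>\<bar> * \<bar>\<gamma>' \<zeta> \<bullet> \<eta>\<bar>"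
    unfolding \<zeta>(3) abs_mult ..
  also have "\<dots> \<le> \<bar>\<beta> - \<alpha>\<bar> * (L * \<bar>\<beta> - \<alpha>\<bar>)"
    using between \<zeta> by (intro mult_mono tangent_small) (auto simp: min_def max_def split: if_splits)
  also have "\<dots> = L * (\<beta> - \<alpha>)\<^sup>2"
    by (simp add: power2_eq_square abs_mult_self_eq mult_ac)
  finally show ?thesis .
qed (use between in auto)

lemma chord_flatness:
  assumes \<beta>: "\<bar>\<beta> - \<alpha>\<bar> \<le> lam" and \<theta>: "\<bar>\<theta> - \<alpha>\<bar> \<le> lam" and "\<gamma> \<beta> \<noteq> \<gamma> \<alpha>"
    and proj: "0 \<le> (\<gamma> \<theta> - \<gamma> \<alpha>) \<bullet> (\<gamma> \<beta> - \<gamma> \<alpha>)"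
      "(\<gamma> \<theta> - \<gamma> \<alpha>) \<bullet> (\<gamma> \<beta> - \<gamma> \<alpha>) \<le> (\<gamma> \<beta> - \<gamma> \<alpha>) \<bullet> (\<gamma> \<beta> - \<gamma> \<alpha>)"
    and \<eta>: "\<eta> \<bullet> (\<gamma> \<beta> - \<gamma> \<alpha>) = 0" "norm \<eta> = 1"
  shows "\<bar>(\<gamma> \<theta> - \<gamma> \<alpha>) \<bullet> \<eta>\<bar> * (norm (\<gamma>' \<alpha>))\<^sup>2 \<le> 4 * L * (dist (\<gamma> \<alpha>) (\<gamma> \<beta>))\<^sup>2"
proof -
  have "\<beta> \<noteq> \<alpha>"
    using \<open>\<gamma> \<beta> \<noteq> \<gamma> \<alpha>\<close> by auto
  then have "\<bar>(\<gamma> \<theta> - \<gamma> \<alpha>) \<bullet> \<eta>\<bar> \<le> L * (\<beta> - \<alpha>)\<^sup>2"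
    using parameter_between[OF \<beta> \<theta> _ proj] by (intro normal_deviation_le[OF \<beta> \<theta> _ _ \<eta>]) auto
  then have "\<bar>(\<gamma> \<theta> - \<gamma> \<alpha>) \<bullet> \<eta>\<bar> * (norm (\<gamma>' \<alpha>))\<^sup>2 \<le> L * (\<beta> - \<alpha>)\<^sup>2 * (norm (\<gamma>' \<alpha>))\<^sup>2"
    by (rule mult_right_mono) simp
  also have "\<dots> = L * (\<bar>\<beta> - \<alpha>\<bar> * norm (\<gamma>' \<alpha>))\<^sup>2"
    by (simp add: power_mult_distrib)
  also have "\<dots> \<le> L * (2 * dist (\<gamma> \<alpha>) (\<gamma> \<beta>))\<^sup>2"
    using chord_length_ge[OF \<beta>] L_nonneg by (intro mult_left_mono power_mono) auto
  finally show ?thesis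
    by (simp add: power_mult_distrib)
qed

end

lemma periodic_inj_eq:
  fixes \<gamma> :: "real \<Rightarrow> 'a"
  assumes per: "\<And>t. \<gamma> (t + 1) = \<gamma> t" and inj: "inj_on \<gamma> {0..<1}"
    and "a \<in> {0..1}" "b \<in> {0..1}" "\<gamma> a = \<gamma> b"
  shows "a = b \<or> \<bar>a - b\<bar> = 1"
proof -
  define a' b' where "a' = (if a = 1 then 0 else a)" and "b' = (if b = 1 then 0 else b)"
  have "\<gamma> 1 = \<gamma> 0"
    using per[of 0] by simp
  then have "\<gamma> a' = \<gamma> b'" "a' \<in> {0..<1}" "b' \<in> {0..<1}"
    using assms(3-5) by (auto simp: a'_def b'_def)
  then have "a' = b'"
    using inj by (auto dest: inj_onD)
  then show ?thesis
    using assms(3,4) by (auto simp: a'_def b'_def split: if_splits)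
qed

lemma closed_curve_near_param:
  fixes \<gamma> :: "real \<Rightarrow> 'a::metric_space" and lam :: real
  assumes cont: "continuous_on UNIV \<gamma>" and per: "\<And>t. \<gamma> (t + 1) = \<gamma> t" and inj: "inj_on \<gamma> {0..<1}"
    and "lam > 0"
  obtains \<rho> where "\<rho> > 0"
    and "\<And>\<alpha> s. \<alpha> \<in> {0..1} \<Longrightarrow> s \<in> {0..1} \<Longrightarrow> dist (\<gamma> s) (\<gamma> \<alpha>) < \<rho> \<Longrightarrow>
           \<exists>u. \<gamma> u = \<gamma> s \<and> \<bar>u - \<alpha>\<bar> < lam"
proof -
  \<comment> \<open>the pairs of parameters that are far apart even modulo the period\<close>
  define K where "K = ({0..1} \<times> {0..1}) \<inter> {x::real \<times> real. lam \<le> \<bar>fst x - snd x\<bar>}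
     \<inter> {x. lam \<le> \<bar>fst x - snd x - 1\<bar>} \<inter> {x. lam \<le> \<bar>fst x - snd x + 1\<bar>}"
  define f where "f x = dist (\<gamma> (fst x)) (\<gamma> (snd x))" for x :: "real \<times> real"
  have "compact K"
    unfolding K_def by (intro compact_Int_closed compact_Times compact_Icc closed_Collect_le continuous_intros)
  have "continuous_on K f"
    unfolding f_def by (intro continuous_intros continuous_on_compose2[OF cont]) auto
  have f_pos: "f x > 0" if "x \<in> K" for x
  proof (rule ccontr)
    assume "\<not> f x > 0"
    then have "\<gamma> (fst x) = \<gamma> (snd x)"
      unfolding f_def by simp
    with that show False
      using periodic_inj_eq[OF per inj, of "fst x" "snd x"] \<open>lam > 0\<close> unfolding K_def by auto
  qed
  obtain \<rho> where "\<rho> > 0" and \<rho>: "\<And>x. x \<in> K \<Longrightarrow> \<rho> \<le> f x"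
  proof (cases "K = {}")
    case False
    then obtain x0 where "x0 \<in> K" "\<And>x. x \<in> K \<Longrightarrow> f x0 \<le> f x"
      using continuous_attains_inf[OF \<open>compact K\<close> _ \<open>continuous_on K f\<close>] by blast
    with f_pos that show ?thesis
      by blast
  qed (use that[of 1] in auto)
  show ?thesis
  proof (rule that[OF \<open>\<rho> > 0\<close>])
    fix \<alpha> s assume "\<alpha> \<in> {0..1}" "s \<in> {0..1}" "dist (\<gamma> s) (\<gamma> \<alpha>) < \<rho>"
    then have "(s, \<alpha>) \<notin> K"
      using \<rho>[of "(s, \<alpha>)"] unfolding f_def by auto
    with \<open>\<alpha> \<in> {0..1}\<close> \<open>s \<in> {0..1}\<close> have "\<bar>s - \<alpha>\<bar> < lam \<or> \<bar>(s - 1) - \<alpha>\<bar> < lam \<or> \<bar>(s + 1) - \<alpha>\<bar> < lam"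
      unfolding K_def by (auto simp: algebra_simps)
    moreover have "\<gamma> (s - 1) = \<gamma> s" "\<gamma> (s + 1) = \<gamma> s"
      using per[of "s - 1"] per[of s] by simp_all
    ultimately show "\<exists>u. \<gamma> u = \<gamma> s \<and> \<bar>u - \<alpha>\<bar> < lam"
      by metis
  qed
qed

lemma lipschitz_if_vector_derivative_bounded:
  fixes f f' :: "real \<Rightarrow> 'a::real_normed_vector"
  assumes "convex S" and "\<And>t. t \<in> S \<Longrightarrow> (f has_vector_derivative f' t) (at t)"
    and "\<And>t. t \<in> S \<Longrightarrow> norm (f' t) \<le> B" and "s \<in> S" "t \<in> S"
  shows "norm (f t - f s) \<le> B * \<bar>t - s\<bar>"
proof -
  have "norm (f t - f s) \<le> B * norm (t - s)"
  proof (rule differentiable_bound[OF assms(1)])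
    show "(f has_derivative (\<lambda>h. h *\<^sub>R f' x)) (at x within S)" if "x \<in> S" for x
      using assms(2)[OF that] by (simp add: has_vector_derivative_def has_derivative_at_withinI)
    show "onorm (\<lambda>h. h *\<^sub>R f' x) \<le> B" if "x \<in> S" for x
      using assms(3)[OF that] onorm_scaleR_left[OF bounded_linear_ident, of "f' x"] by (simp add: onorm_id)
  qed (use assms in auto)
  then show ?thesis
    by simp
qed

lemma smooth_closed_curve_derivatives:
  assumes "smooth_closed_curve \<gamma>"
  shows "(\<gamma> has_vector_derivative vderiv \<gamma> t) (at t)"
    and "(vderiv \<gamma> has_vector_derivative vderiv (vderiv \<gamma>) t) (at t)"
    and "continuous_on UNIV \<gamma>" and "continuous_on UNIV (vderiv \<gamma>)"
    and "continuous_on UNIV (vderiv (vderiv \<gamma>))"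
proof -
  have D: "((vderiv ^^ n) \<gamma>) differentiable (at t)" for n t
    using assms unfolding smooth_closed_curve_def by blast
  have D0: "\<gamma> differentiable (at t)" and D1: "vderiv \<gamma> differentiable (at t)"
    and D2: "vderiv (vderiv \<gamma>) differentiable (at t)" for t
    using D[of 0 t] D[of 1 t] D[of 2 t] by (simp_all add: numeral_2_eq_2)
  show "(\<gamma> has_vector_derivative vderiv \<gamma> t) (at t)"
    "(vderiv \<gamma> has_vector_derivative vderiv (vderiv \<gamma>) t) (at t)"
    using D0 D1 unfolding vderiv_def by (simp_all add: vector_derivative_works[symmetric])
  show "continuous_on UNIV \<gamma>" "continuous_on UNIV (vderiv \<gamma>)" "continuous_on UNIV (vderiv (vderiv \<gamma>))"
    using D0 D1 D2 by (simp_all add: continuous_at_imp_continuous_on differentiable_imp_continuous_within)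
qed

lemma smooth_closed_curve_nearly_straight:
  assumes "smooth_closed_curve \<gamma>"
  obtains m L lam where "0 < m" "0 \<le> L" "0 < lam"
    and "\<And>\<alpha>. \<alpha> \<in> {0..1} \<Longrightarrow> m \<le> norm (vderiv \<gamma> \<alpha>) \<and> nearly_straight_arc \<gamma> (vderiv \<gamma>) \<alpha> lam L"
proof -
  define \<gamma>' where "\<gamma>' = vderiv \<gamma>"
  note derivs = smooth_closed_curve_derivatives[OF assms, folded \<gamma>'_def]
  have per: "\<And>t. \<gamma> (t + 1) = \<gamma> t" and inj: "inj_on \<gamma> {0..<1}" and nonzero: "\<And>t. \<gamma>' t \<noteq> 0"
    using assms unfolding smooth_closed_curve_def \<gamma>'_def by blast+
  define I where "I = {-2..3::real}"
  have I: "compact I" "I \<noteq> {}" "convex I"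
    unfolding I_def by auto
  obtain t0 where "t0 \<in> I" and t0: "\<And>t. t \<in> I \<Longrightarrow> norm (\<gamma>' t0) \<le> norm (\<gamma>' t)"
    using continuous_attains_inf[OF I(1,2), of "\<lambda>t. norm (\<gamma>' t)"]
      continuous_on_norm[OF continuous_on_subset[OF derivs(4)]] by blast
  define m where "m = norm (\<gamma>' t0)"
  have m: "m > 0" "\<And>t. t \<in> I \<Longrightarrow> m \<le> norm (\<gamma>' t)"
    unfolding m_def using nonzero t0 by auto
  have "bounded (vderiv \<gamma>' ` I)"
    by (intro compact_imp_bounded compact_continuous_image continuous_on_subset[OF derivs(5)] I) auto
  then obtain L where "L > 0" and L: "\<And>t. t \<in> I \<Longrightarrow> norm (vderiv \<gamma>' t) \<le> L"
    by (auto simp: bounded_pos)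
  have lipschitz: "norm (\<gamma>' b - \<gamma>' a) \<le> L * \<bar>b - a\<bar>" if "a \<in> I" "b \<in> I" for a b
    using derivs(2) L that by (intro lipschitz_if_vector_derivative_bounded[OF I(3)])
  define lam where "lam = min 1 (m / (8 * (L + 1)))"
  have lam: "0 < lam" "lam \<le> 1" "8 * (L * lam) \<le> m"
  proof -
    show "0 < lam" "lam \<le> 1"
      unfolding lam_def using m \<open>L > 0\<close> by auto
    have "8 * (L * lam) \<le> 8 * ((L + 1) * (m / (8 * (L + 1))))"
      unfolding lam_def using \<open>L > 0\<close> m by (intro mult_left_mono mult_mono) auto
    also have "\<dots> = m"
      using \<open>L > 0\<close> by (simp add: field_simps)
    finally show "8 * (L * lam) \<le> m" .
  qed
  show ?thesis
  proof (rule that[OF m(1) less_imp_le[OF \<open>L > 0\<close>] lam(1)])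
    fix \<alpha> :: real assume \<alpha>: "\<alpha> \<in> {0..1}"
    have in_I: "s \<in> I" if "\<bar>s - \<alpha>\<bar> \<le> lam" for s
      using that \<alpha> lam(2) unfolding I_def by (auto simp: abs_le_iff)
    have "m \<le> norm (\<gamma>' \<alpha>)"
      using m(2)[OF in_I[of \<alpha>]] lam(1) by simp
    moreover have "nearly_straight_arc \<gamma> \<gamma>' \<alpha> lam L"
    proof
      show "(\<gamma> has_vector_derivative \<gamma>' s) (at s)" for s
        by (rule derivs(1))
      show "norm (\<gamma>' b - \<gamma>' a) \<le> L * \<bar>b - a\<bar>" if "\<bar>a - \<alpha>\<bar> \<le> lam" "\<bar>b - \<alpha>\<bar> \<le> lam" for a b
        using lipschitz in_I that by blast
      show "0 \<le> L" "\<gamma>' \<alpha> \<noteq> 0"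
        using \<open>L > 0\<close> nonzero by auto
      show "8 * (L * lam) \<le> norm (\<gamma>' \<alpha>)"
        using lam(3) \<open>m \<le> norm (\<gamma>' \<alpha>)\<close> by simp
    qed
    ultimately show "m \<le> norm (vderiv \<gamma> \<alpha>) \<and> nearly_straight_arc \<gamma> (vderiv \<gamma>) \<alpha> lam L"
      unfolding \<gamma>'_def by simp
  qed
qed

lemma smooth_closed_curve_flat:
  assumes "smooth_closed_curve \<gamma>"
  obtains h0 where "h0 > 0"
    and "\<And>y z p \<eta>. y \<in> \<gamma> ` {0..1} \<Longrightarrow> z \<in> \<gamma> ` {0..1} \<Longrightarrow> p \<in> \<gamma> ` {0..1} \<Longrightarrow>
           dist y z \<le> h0 \<Longrightarrow> dist y p \<le> h0 \<Longrightarrow> y \<noteq> z \<Longrightarrow>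
           0 \<le> (p - y) \<bullet> (z - y) \<Longrightarrow> (p - y) \<bullet> (z - y) \<le> (z - y) \<bullet> (z - y) \<Longrightarrow>
           \<eta> \<bullet> (z - y) = 0 \<Longrightarrow> norm \<eta> = 1 \<Longrightarrow> \<bar>(p - y) \<bullet> \<eta>\<bar> \<le> dist y z"
proof -
  obtain m L lam where m: "0 < m" and "0 \<le> L" "0 < lam"
    and arc: "\<And>\<alpha>. \<alpha> \<in> {0..1} \<Longrightarrow> m \<le> norm (vderiv \<gamma> \<alpha>) \<and> nearly_straight_arc \<gamma> (vderiv \<gamma>) \<alpha> lam L"
    by (rule smooth_closed_curve_nearly_straight[OF assms]) blast
  have "continuous_on UNIV \<gamma>" and per: "\<And>t. \<gamma> (t + 1) = \<gamma> t" and inj: "inj_on \<gamma> {0..<1}"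
    using smooth_closed_curve_derivatives(3)[OF assms] assms unfolding smooth_closed_curve_def by blast+
  obtain \<rho> where "\<rho> > 0" and near: "\<And>\<alpha> s. \<alpha> \<in> {0..1} \<Longrightarrow> s \<in> {0..1} \<Longrightarrow> dist (\<gamma> s) (\<gamma> \<alpha>) < \<rho> \<Longrightarrow>
      \<exists>u. \<gamma> u = \<gamma> s \<and> \<bar>u - \<alpha>\<bar> < lam"
    by (rule closed_curve_near_param[OF \<open>continuous_on UNIV \<gamma>\<close> per inj \<open>0 < lam\<close>]) blast
  define h0 where "h0 = min (\<rho> / 2) (m\<^sup>2 / (4 * L + 1))"
  show ?thesis
  proof (rule that)
    show "h0 > 0"
      unfolding h0_def using \<open>\<rho> > 0\<close> m \<open>0 \<le> L\<close> by simp
  next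
    fix y z p \<eta> :: "real^2"
    assume y: "y \<in> \<gamma> ` {0..1}" and z: "z \<in> \<gamma> ` {0..1}" and p: "p \<in> \<gamma> ` {0..1}"
      and yz_h0: "dist y z \<le> h0" and yp_h0: "dist y p \<le> h0" and "y \<noteq> z"
      and proj: "0 \<le> (p - y) \<bullet> (z - y)" "(p - y) \<bullet> (z - y) \<le> (z - y) \<bullet> (z - y)"
      and \<eta>: "\<eta> \<bullet> (z - y) = 0" "norm \<eta> = 1"
    obtain \<alpha> where \<alpha>: "\<alpha> \<in> {0..1}" "y = \<gamma> \<alpha>"
      using y by blast
    have param_near: "\<exists>u. \<gamma> u = q \<and> \<bar>u - \<alpha>\<bar> \<le> lam" if q: "q \<in> \<gamma> ` {0..1}" "dist y q \<le> h0" for q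
    proof -
      obtain s where "s \<in> {0..1}" "q = \<gamma> s"
        using q(1) by blast
      moreover have "dist (\<gamma> s) (\<gamma> \<alpha>) < \<rho>"
        using q(2) \<open>\<rho> > 0\<close> \<alpha> \<open>q = \<gamma> s\<close> unfolding h0_def by (simp add: dist_commute)
      ultimately obtain u where "\<gamma> u = q" "\<bar>u - \<alpha>\<bar> < lam"
        using near[OF \<alpha>(1)] by blast
      then show ?thesis
        by (intro exI[of _ u]) auto
    qed
    obtain \<beta> where \<beta>: "z = \<gamma> \<beta>" "\<bar>\<beta> - \<alpha>\<bar> \<le> lam"
      using param_near[OF z yz_h0] by blast
    obtain \<theta> where \<theta>: "p = \<gamma> \<theta>" "\<bar>\<theta> - \<alpha>\<bar> \<le> lam"
      using param_near[OF p yp_h0] by blast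
    interpret arc: nearly_straight_arc \<gamma> "vderiv \<gamma>" \<alpha> lam L
      using arc[OF \<alpha>(1)] by blast
    define r where "r = dist y z"
    have "\<bar>(p - y) \<bullet> \<eta>\<bar> * (norm (vderiv \<gamma> \<alpha>))\<^sup>2 \<le> 4 * L * r\<^sup>2"
      unfolding r_def \<alpha>(2) \<beta>(1) \<theta>(1)
      using \<beta> \<theta> \<open>y \<noteq> z\<close> proj \<eta> \<alpha> by (intro arc.chord_flatness) auto
    moreover have "m\<^sup>2 \<le> (norm (vderiv \<gamma> \<alpha>))\<^sup>2"
      using arc[OF \<alpha>(1)] m by (intro power_mono) auto
    ultimately have "\<bar>(p - y) \<bullet> \<eta>\<bar> * m\<^sup>2 \<le> 4 * L * r * r"
      using mult_left_mono[of "m\<^sup>2" "(norm (vderiv \<gamma> \<alpha>))\<^sup>2" "\<bar>(p - y) \<bullet> \<eta>\<bar>"]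
      by (simp add: power2_eq_square mult.assoc)
    also have "4 * L * r * r \<le> m\<^sup>2 * r"
    proof -
      have "r * (4 * L + 1) \<le> m\<^sup>2"
        using yz_h0 \<open>0 \<le> L\<close> unfolding h0_def r_def by (simp add: field_simps)
      moreover have "0 \<le> r"
        unfolding r_def by simp
      ultimately have "4 * L * r \<le> m\<^sup>2"
        by (simp add: algebra_simps)
      then show ?thesis
        using \<open>0 \<le> r\<close> by (rule mult_right_mono)
    qed
    finally show "\<bar>(p - y) \<bullet> \<eta>\<bar> \<le> dist y z"
      using m unfolding r_def by (simp add: mult.commute)
  qed
qed

section \<open>Coordinates along the chord\<close>

lemma inner_real2: "(x::real^2) \<bullet> y = x$1 * y$1 + x$2 * y$2"
  by (simp add: inner_vec_def sum_2)

lemma orthonormal_pair_expansion: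
  fixes u \<eta> x :: "real^2"
  assumes "norm u = 1" "norm \<eta> = 1" "\<eta> \<bullet> u = 0"
  shows "x = (x \<bullet> u) *\<^sub>R u + (x \<bullet> \<eta>) *\<^sub>R \<eta>"
proof -
  have "u \<bullet> u = 1" "\<eta> \<bullet> \<eta> = 1"
    using assms by (simp_all add: dot_square_norm)
  then have h: "u$1 * u$1 + u$2 * u$2 = 1" "\<eta>$1 * \<eta>$1 + \<eta>$2 * \<eta>$2 = 1" "\<eta>$1 * u$1 + \<eta>$2 * u$2 = 0"
    using assms(3) unfolding inner_real2 by simp_all
  \<comment> \<open>the matrix with rows \<open>u\<close> and \<open>\<eta>\<close> is orthogonal, so so is its transpose\<close>
  then have s1: "u$1 * u$1 + \<eta>$1 * \<eta>$1 = 1" and s2: "u$2 * u$2 + \<eta>$2 * \<eta>$2 = 1"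
    by algebra+
  have "(u$1 * u$2 + \<eta>$1 * \<eta>$2)\<^sup>2 = 0"
    using h by algebra
  then have s3: "u$1 * u$2 + \<eta>$1 * \<eta>$2 = 0"
    by simp
  show ?thesis
  proof (subst vec_eq_iff, intro allI)
    fix i :: 2
    have "i = 1 \<or> i = 2"
      using exhaust_2 by blast
    then show "x $ i = ((x \<bullet> u) *\<^sub>R u + (x \<bullet> \<eta>) *\<^sub>R \<eta>) $ i"
    proof
      assume "i = 1"
      moreover have "((x \<bullet> u) *\<^sub>R u + (x \<bullet> \<eta>) *\<^sub>R \<eta>) $ 1
          = x$1 * (u$1 * u$1 + \<eta>$1 * \<eta>$1) + x$2 * (u$1 * u$2 + \<eta>$1 * \<eta>$2)"
        unfolding inner_real2 by (simp add: algebra_simps)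
      ultimately show ?thesis
        using s1 s3 by simp
    next
      assume "i = 2"
      moreover have "((x \<bullet> u) *\<^sub>R u + (x \<bullet> \<eta>) *\<^sub>R \<eta>) $ 2
          = x$1 * (u$1 * u$2 + \<eta>$1 * \<eta>$2) + x$2 * (u$2 * u$2 + \<eta>$2 * \<eta>$2)"
        unfolding inner_real2 by (simp add: algebra_simps)
      ultimately show ?thesis
        using s2 s3 by simp
    qed
  qed
qed

lemma poly2_affine_substitution:
  fixes m U W :: "real^2"
  assumes "poly2 k v"
  obtains Q where "total_degree_le k Q" "\<And>s w. v (m + s *\<^sub>R U + w *\<^sub>R W) = bpoly Q s w"
proof -
  obtain c where c: "\<And>x. v x = (\<Sum>a\<le>k. \<Sum>b\<le>k - a. c a b * (x$1) ^ a * (x$2) ^ b)"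
    using assms unfolding poly2_def by blast
  define A1 where "A1 = [:[:m$1, U$1:], [:W$1:]:]"
  define A2 where "A2 = [:[:m$2, U$2:], [:W$2:]:]"
  define Q where "Q = (\<Sum>a\<le>k. \<Sum>b\<le>k - a. [:[:c a b:]:] * A1 ^ a * A2 ^ b)"
  show ?thesis
  proof (rule that)
    show "total_degree_le k Q"
      unfolding Q_def
    proof (intro total_degree_le_sum)
      fix a b assume "a \<in> {..k}" "b \<in> {..k - a}"
      moreover have "total_degree_le (0 + 1 * a + 1 * b) ([:[:c a b:]:] * A1 ^ a * A2 ^ b)"
        unfolding A1_def A2_def
        by (intro total_degree_le_mult total_degree_le_power total_degree_le_const total_degree_le_affine)
      ultimately show "total_degree_le k ([:[:c a b:]:] * A1 ^ a * A2 ^ b)"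
        by (auto intro: total_degree_le_mono)
    qed auto
    fix s w
    have "bpoly A1 s w = (m + s *\<^sub>R U + w *\<^sub>R W)$1" "bpoly A2 s w = (m + s *\<^sub>R U + w *\<^sub>R W)$2"
      unfolding A1_def A2_def by (simp_all add: algebra_simps)
    then show "v (m + s *\<^sub>R U + w *\<^sub>R W) = bpoly Q s w"
      unfolding Q_def c by (simp add: bpoly_sum mult.assoc)
  qed
qed

lemma has_derivative_bpoly:
  fixes \<sigma> \<omega> :: "'a::real_normed_vector \<Rightarrow> real"
  assumes "(\<sigma> has_derivative \<sigma>') (at x)" "(\<omega> has_derivative \<omega>') (at x)"
  shows "((\<lambda>x. bpoly Q (\<sigma> x) (\<omega> x)) has_derivative
     (\<lambda>e. bpoly (map_poly pderiv Q) (\<sigma> x) (\<omega> x) * \<sigma>' e + bpoly (pderiv Q) (\<sigma> x) (\<omega> x) * \<omega>' e)) (at x)"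
proof (induction Q rule: pCons_induct)
  case (pCons c Q)
  have "((\<lambda>x. poly c (\<sigma> x) + \<omega> x * bpoly Q (\<sigma> x) (\<omega> x)) has_derivative
     (\<lambda>e. \<sigma>' e * poly (pderiv c) (\<sigma> x)
        + (\<omega> x * (bpoly (map_poly pderiv Q) (\<sigma> x) (\<omega> x) * \<sigma>' e + bpoly (pderiv Q) (\<sigma> x) (\<omega> x) * \<omega>' e)
        + \<omega>' e * bpoly Q (\<sigma> x) (\<omega> x)))) (at x)"
    by (intro has_derivative_add has_derivative_mult DERIV_compose_FDERIV poly_DERIV assms pCons.IH)
  moreover have "(\<lambda>x. bpoly (pCons c Q) (\<sigma> x) (\<omega> x)) = (\<lambda>x. poly c (\<sigma> x) + \<omega> x * bpoly Q (\<sigma> x) (\<omega> x))"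
    by simp
  ultimately show ?case
    by (auto elim!: has_derivative_eq_rhs simp: fun_eq_iff pderiv_pCons map_poly_pCons algebra_simps)
qed simp

text \<open>Coordinate along the unit vector \<open>e\<close>, centred at \<open>m\<close> and scaled by \<open>2 / r\<close>: for \<open>m\<close> the midpoint
  and \<open>r\<close> the length of a segment in direction \<open>e\<close>, the segment is mapped onto \<open>[-1, 1]\<close>.\<close>
definition frame_coord :: "real^2 \<Rightarrow> real^2 \<Rightarrow> real \<Rightarrow> real^2 \<Rightarrow> real" where
  "frame_coord m e r x = (2 / r) * ((x - m) \<bullet> e)"

lemma has_derivative_frame_coord:
  "(frame_coord m e r has_derivative (\<lambda>h. (2 / r) * (h \<bullet> e))) (at x)"
proof -
  have "((\<lambda>x. x - m) has_derivative (\<lambda>h. h - 0)) (at x)"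
    by (intro has_derivative_diff has_derivative_ident has_derivative_const)
  from has_derivative_mult_right[OF has_derivative_inner_left[OF this, of e], of "2 / r"]
  show ?thesis
    unfolding frame_coord_def[abs_def] by simp
qed

lemma has_derivative_bpoly_frame:
  "((\<lambda>x. bpoly Q (frame_coord m u r x) (frame_coord m \<eta> r x)) has_derivative
     (\<lambda>h. (2 / r) * (bpoly (map_poly pderiv Q) (frame_coord m u r x) (frame_coord m \<eta> r x) * (h \<bullet> u)
                    + bpoly (pderiv Q) (frame_coord m u r x) (frame_coord m \<eta> r x) * (h \<bullet> \<eta>)))) (at x)"
  by (rule has_derivative_eq_rhs[OF has_derivative_bpoly[OF has_derivative_frame_coord has_derivative_frame_coord]])
    (simp add: fun_eq_iff algebra_simps)

lemma dirderiv_pow_bpoly_frame: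
  assumes "\<eta> \<bullet> u = 0" "norm \<eta> = 1"
  shows "dirderiv_pow j \<eta> (\<lambda>x. bpoly Q (frame_coord m u r x) (frame_coord m \<eta> r x))
       = (\<lambda>x. (2 / r) ^ j * bpoly ((pderiv ^^ j) Q) (frame_coord m u r x) (frame_coord m \<eta> r x))"
proof (induction j)
  case (Suc j)
  have "dirderiv \<eta> (\<lambda>x. c * bpoly P (frame_coord m u r x) (frame_coord m \<eta> r x))
      = (\<lambda>x. c * (2 / r) * bpoly (pderiv P) (frame_coord m u r x) (frame_coord m \<eta> r x))" for c P
  proof
    fix x
    show "dirderiv \<eta> (\<lambda>x. c * bpoly P (frame_coord m u r x) (frame_coord m \<eta> r x)) x
        = c * (2 / r) * bpoly (pderiv P) (frame_coord m u r x) (frame_coord m \<eta> r x)"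
      unfolding dirderiv_def frechet_derivative_at[OF has_derivative_mult_right[OF has_derivative_bpoly_frame], symmetric]
      using assms by (simp add: inner_commute[of u \<eta>] dot_square_norm)
  qed
  from this[of "(2 / r) ^ j" "(pderiv ^^ j) Q"] Suc show ?case
    by (simp add: dirderiv_pow_def mult.commute)
qed (simp add: dirderiv_pow_def)

lemma grad_bpoly_frame:
  "grad (\<lambda>x. bpoly Q (frame_coord m u r x) (frame_coord m \<eta> r x)) x
     = (2 / r) *\<^sub>R (bpoly (map_poly pderiv Q) (frame_coord m u r x) (frame_coord m \<eta> r x) *\<^sub>R u
                    + bpoly (pderiv Q) (frame_coord m u r x) (frame_coord m \<eta> r x) *\<^sub>R \<eta>)"
  unfolding grad_def frechet_derivative_at[OF has_derivative_bpoly_frame, symmetric]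
  by (simp add: vec_eq_iff inner_axis' algebra_simps)

lemma poly2_in_frame:
  fixes u \<eta> m :: "real^2"
  assumes "poly2 k v" "norm u = 1" "norm \<eta> = 1" "\<eta> \<bullet> u = 0" "r \<noteq> 0"
  obtains Q where "total_degree_le k Q" "v = (\<lambda>x. bpoly Q (frame_coord m u r x) (frame_coord m \<eta> r x))"
proof -
  obtain Q where Q: "total_degree_le k Q"
    and v: "\<And>s w. v (m + s *\<^sub>R ((r / 2) *\<^sub>R u) + w *\<^sub>R ((r / 2) *\<^sub>R \<eta>)) = bpoly Q s w"
    by (rule poly2_affine_substitution[OF assms(1)]) blast
  have "x = m + frame_coord m u r x *\<^sub>R ((r / 2) *\<^sub>R u) + frame_coord m \<eta> r x *\<^sub>R ((r / 2) *\<^sub>R \<eta>)" for x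
    using orthonormal_pair_expansion[OF assms(2-4), of "x - m"] assms(5)
    by (simp add: frame_coord_def algebra_simps)
  then have "v = (\<lambda>x. bpoly Q (frame_coord m u r x) (frame_coord m \<eta> r x))"
    using v by (metis (no_types))
  with Q show ?thesis
    by (rule that)
qed

lemma gl_point_frame_coords:
  fixes y z p \<eta> :: "real^2"
  assumes "y \<noteq> z" "\<eta> \<bullet> (z - y) = 0" and perp: "(p - gl_point y z t) \<bullet> (z - y) = 0"
  defines "r \<equiv> dist y z"
  shows "frame_coord (midpoint y z) ((1 / r) *\<^sub>R (z - y)) r p = t"
    and "frame_coord (midpoint y z) \<eta> r p = (2 / r) * ((p - y) \<bullet> \<eta>)"
proof -
  have r: "r > 0" "(z - y) \<bullet> (z - y) = r\<^sup>2"
    using assms(1) unfolding r_def by (simp_all add: dist_norm norm_minus_commute dot_square_norm)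
  have split: "(p - q) \<bullet> (z - y) = (p - gl_point y z t) \<bullet> (z - y) + (gl_point y z t - q) \<bullet> (z - y)" for q
    by (simp add: inner_diff_left)
  have "gl_point y z t - midpoint y z = (t / 2) *\<^sub>R (z - y)"
    by (simp add: gl_point_def midpoint_def vec_eq_iff) (simp add: field_simps)
  then have "(p - midpoint y z) \<bullet> (z - y) = t / 2 * r\<^sup>2"
    unfolding split[of "midpoint y z"] using perp r(2) by simp
  then show "frame_coord (midpoint y z) ((1 / r) *\<^sub>R (z - y)) r p = t"
    using r(1) by (simp add: frame_coord_def power2_eq_square) (simp add: field_simps)
  have "p - midpoint y z = (p - y) - (1 / 2) *\<^sub>R (z - y)"
    unfolding midpoint_def by (simp add: algebra_simps vec_eq_iff)
  then have "(p - midpoint y z) \<bullet> \<eta> = (p - y) \<bullet> \<eta> - (1 / 2) * ((z - y) \<bullet> \<eta>)"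
    by (simp only: inner_diff_left inner_scaleR_left)
  then show "frame_coord (midpoint y z) \<eta> r p = (2 / r) * ((p - y) \<bullet> \<eta>)"
    using assms(2) by (simp add: frame_coord_def inner_commute)
qed

lemma gl_point_projection_between:
  assumes "\<bar>t\<bar> \<le> 1" "(p - gl_point y z t) \<bullet> (z - y) = 0"
  shows "0 \<le> (p - y) \<bullet> (z - y) \<and> (p - y) \<bullet> (z - y) \<le> (z - y) \<bullet> (z - y)"
proof -
  have "(p - y) \<bullet> (z - y) = (p - gl_point y z t) \<bullet> (z - y) + (gl_point y z t - y) \<bullet> (z - y)"
    by (simp add: inner_diff_left)
  also have "\<dots> = (1 + t) / 2 * ((z - y) \<bullet> (z - y))"
    using assms(2) by (simp add: gl_point_def)
  finally have eq: "(p - y) \<bullet> (z - y) = (1 + t) / 2 * ((z - y) \<bullet> (z - y))" .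
  have c: "0 \<le> (z - y) \<bullet> (z - y)"
    by simp
  have "0 \<le> (1 + t) / 2 * ((z - y) \<bullet> (z - y))"
    using assms(1) c by (intro mult_nonneg_nonneg) auto
  moreover have "(1 + t) / 2 * ((z - y) \<bullet> (z - y)) \<le> 1 * ((z - y) \<bullet> (z - y))"
    using assms(1) c by (intro mult_right_mono) auto
  ultimately show ?thesis
    unfolding eq by simp
qed

lemma abs_frame_coord_le:
  assumes "norm e = 1" "0 < r" "dist x m \<le> h"
  shows "\<bar>frame_coord m e r x\<bar> \<le> 2 * h / r"
proof -
  have "\<bar>(x - m) \<bullet> e\<bar> \<le> h"
    using Cauchy_Schwarz_ineq2[of "x - m" e] assms(1,3) by (simp add: dist_norm)
  then show ?thesis
    unfolding frame_coord_def using assms(2) by (simp add: abs_mult divide_right_mono)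
qed

lemma norm_grad_bpoly_frame_le:
  assumes "norm u = 1" "norm \<eta> = 1" "0 < r"
  shows "norm (grad (\<lambda>x. bpoly Q (frame_coord m u r x) (frame_coord m \<eta> r x)) x)
    \<le> 2 / r * (\<bar>bpoly (map_poly pderiv Q) (frame_coord m u r x) (frame_coord m \<eta> r x)\<bar>
              + \<bar>bpoly (pderiv Q) (frame_coord m u r x) (frame_coord m \<eta> r x)\<bar>)"
proof -
  let ?A = "bpoly (map_poly pderiv Q) (frame_coord m u r x) (frame_coord m \<eta> r x)"
  let ?B = "bpoly (pderiv Q) (frame_coord m u r x) (frame_coord m \<eta> r x)"
  have "norm (grad (\<lambda>x. bpoly Q (frame_coord m u r x) (frame_coord m \<eta> r x)) x)
      = 2 / r * norm (?A *\<^sub>R u + ?B *\<^sub>R \<eta>)"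
    unfolding grad_bpoly_frame using assms(3) by simp
  also have "\<dots> \<le> 2 / r * (\<bar>?A\<bar> + \<bar>?B\<bar>)"
    using norm_triangle_ineq[of "?A *\<^sub>R u" "?B *\<^sub>R \<eta>"] assms by (intro mult_left_mono) auto
  finally show ?thesis .
qed

section \<open>The estimate on a cut triangle\<close>

interpretation gauss_legendre: node_sets gl_nodes
  by unfold_locales (simp_all add: finite_gl_nodes card_gl_nodes abs_le_1_if_gl_node)

lemma node_data_le_max_dirderiv:
  assumes "r > 0"
    and dir: "\<And>l t. l \<le> k \<Longrightarrow> t \<in> gl_nodes l \<Longrightarrow>
               dirderiv_pow (k - l) \<eta> v (xp l t) = (2 / r) ^ (k - l) * bpoly ((pderiv ^^ (k - l)) Q) t (\<delta> l t)"
  shows "gauss_legendre.node_data k Q \<delta>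
      \<le> (\<Sum>l\<le>k. real (Suc k) * ((r / 2) ^ (k - l) * Max ((\<lambda>t. \<bar>dirderiv_pow (k - l) \<eta> v (xp l t)\<bar>) ` gl_nodes l)))"
  unfolding gauss_legendre.node_data_def
proof (rule sum_mono)
  fix l assume l: "l \<in> {..k}"
  define M where "M = Max ((\<lambda>t. \<bar>dirderiv_pow (k - l) \<eta> v (xp l t)\<bar>) ` gl_nodes l)"
  have le_M: "\<bar>dirderiv_pow (k - l) \<eta> v (xp l t)\<bar> \<le> M" if "t \<in> gl_nodes l" for t
    unfolding M_def using that finite_gl_nodes by (intro Max_ge) auto
  have "gl_nodes l \<noteq> {}"
    using card_gl_nodes[of l] by auto
  then have "0 \<le> M"
    using le_M abs_ge_zero order_trans by blast
  have "\<bar>bpoly ((pderiv ^^ (k - l)) Q) t (\<delta> l t)\<bar> \<le> (r / 2) ^ (k - l) * M" if t: "t \<in> gl_nodes l" for t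
  proof -
    have "(r / 2) ^ (k - l) * (2 / r) ^ (k - l) = 1"
      using \<open>r > 0\<close> by (simp flip: power_mult_distrib)
    then have "bpoly ((pderiv ^^ (k - l)) Q) t (\<delta> l t) = (r / 2) ^ (k - l) * dirderiv_pow (k - l) \<eta> v (xp l t)"
      using dir[OF _ t] l by (simp add: mult.assoc[symmetric])
    then show ?thesis
      using le_M[OF t] \<open>r > 0\<close> by (simp add: abs_mult mult_left_mono)
  qed
  then have "(\<Sum>t\<in>gl_nodes l. \<bar>bpoly ((pderiv ^^ (k - l)) Q) t (\<delta> l t)\<bar>) \<le> (\<Sum>t\<in>gl_nodes l. (r / 2) ^ (k - l) * M)"
    by (rule sum_mono)
  also have "\<dots> = real (Suc l) * ((r / 2) ^ (k - l) * M)"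
    by (simp add: card_gl_nodes)
  also have "\<dots> \<le> real (Suc k) * ((r / 2) ^ (k - l) * M)"
    using l \<open>0 \<le> M\<close> \<open>r > 0\<close> by (intro mult_right_mono) auto
  finally show "(\<Sum>t\<in>gl_nodes l. \<bar>bpoly ((pderiv ^^ (k - l)) Q) t (\<delta> l t)\<bar>)
      \<le> real (Suc k) * ((r / 2) ^ (k - l) * Max ((\<lambda>t. \<bar>dirderiv_pow (k - l) \<eta> v (xp l t)\<bar>) ` gl_nodes l))"
    unfolding M_def .
qed

lemma rescaling_power_identity:
  fixes h r :: real
  assumes "r > 0" "l \<le> k"
  shows "(2 * h / r) ^ k * (r / 2) ^ (k - l) = 2 ^ l * h ^ k * (1 / r ^ l)"
proof -
  obtain j where k: "k = l + j"
    using assms(2) le_Suc_ex by blast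
  have "(2 * h / r) ^ k * (r / 2) ^ (k - l) = (2 * h / r) ^ l * ((2 * h / r) ^ j * (r / 2) ^ j)"
    unfolding k by (simp only: power_add add_diff_cancel_left' mult.assoc)
  also have "(2 * h / r) ^ j * (r / 2) ^ j = ((2 * h / r) * (r / 2)) ^ j"
    by (simp only: power_mult_distrib)
  also have "(2 * h / r) * (r / 2) = h"
    using assms(1) by simp
  also have "(2 * h / r) ^ l * h ^ j = 2 ^ l * h ^ k * (1 / r ^ l)"
    unfolding k by (simp add: power_add power_divide power_mult_distrib)
  finally show ?thesis .
qed

lemma Max_abs_image_nonneg:
  fixes f :: "'a \<Rightarrow> real"
  assumes "finite A" "A \<noteq> {}"
  shows "0 \<le> Max ((\<lambda>t. \<bar>f t\<bar>) ` A)"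
proof -
  obtain a where "a \<in> A"
    using assms(2) by blast
  then have "\<bar>f a\<bar> \<le> Max ((\<lambda>t. \<bar>f t\<bar>) ` A)"
    using assms(1) by (intro Max_ge) auto
  then show ?thesis
    using abs_ge_zero[of "f a"] by linarith
qed

lemma rescaled_sum_le:
  fixes r h C :: real and M :: "nat \<Rightarrow> real"
  assumes "0 < r" "r \<le> h" "0 \<le> C" "\<And>l. 0 \<le> M l"
  shows "C * (2 * h / r) ^ k * (\<Sum>l\<le>k. real (Suc k) * ((r / 2) ^ (k - l) * M l))
      \<le> real (Suc k) * 2 ^ k * C * h ^ k * (\<Sum>l\<le>k. 1 / r ^ l * M l)"
proof -
  have "C * (2 * h / r) ^ k * (\<Sum>l\<le>k. real (Suc k) * ((r / 2) ^ (k - l) * M l))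
      = real (Suc k) * C * (\<Sum>l\<le>k. (2 * h / r) ^ k * (r / 2) ^ (k - l) * M l)"
    by (simp add: sum_distrib_left mult_ac)
  also have "\<dots> = real (Suc k) * C * (\<Sum>l\<le>k. 2 ^ l * (h ^ k * (1 / r ^ l * M l)))"
    using rescaling_power_identity[OF assms(1)] by (intro arg_cong[where f = "(*) _"] sum.cong) auto
  also have "\<dots> \<le> real (Suc k) * C * (\<Sum>l\<le>k. 2 ^ k * (h ^ k * (1 / r ^ l * M l)))"
  proof (rule mult_left_mono[OF sum_mono])
    fix l assume "l \<in> {..k}"
    moreover have "0 \<le> h ^ k * (1 / r ^ l * M l)"
      using assms by simp
    ultimately show "2 ^ l * (h ^ k * (1 / r ^ l * M l)) \<le> 2 ^ k * (h ^ k * (1 / r ^ l * M l))"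
      by (intro mult_right_mono power_increasing) auto
  qed (use assms in simp)
  also have "\<dots> = real (Suc k) * 2 ^ k * C * h ^ k * (\<Sum>l\<le>k. 1 / r ^ l * M l)"
    by (simp add: sum_distrib_left mult_ac)
  finally show ?thesis .
qed

lemma estimate_on_triangle:
  fixes a b c y z \<eta> x :: "real^2" and xp :: "nat \<Rightarrow> real \<Rightarrow> real^2" and v :: "real^2 \<Rightarrow> real"
    and C :: real and k :: nat
  defines "T \<equiv> convex hull {a, b, c}"
  defines "B \<equiv> real (Suc k) * 2 ^ k * C * diameter T ^ k *
             (\<Sum>l\<le>k. (1 / dist y z ^ l) * Max ((\<lambda>t. \<bar>dirderiv_pow (k - l) \<eta> v (xp l t)\<bar>) ` gl_nodes l))"
  assumes "0 \<le> C"
    and reference: "\<And>Q \<delta> R s w. total_degree_le k Q \<Longrightarrow> (\<forall>l\<le>k. \<forall>t\<in>gl_nodes l. \<bar>\<delta> l t\<bar> \<le> 2) \<Longrightarrow>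
         1 \<le> R \<Longrightarrow> \<bar>s\<bar> \<le> R \<Longrightarrow> \<bar>w\<bar> \<le> R \<Longrightarrow>
         \<bar>bpoly Q s w\<bar> \<le> C * R ^ k * gauss_legendre.node_data k Q \<delta>
       \<and> R * (\<bar>bpoly (map_poly pderiv Q) s w\<bar> + \<bar>bpoly (pderiv Q) s w\<bar>) \<le> C * R ^ k * gauss_legendre.node_data k Q \<delta>"
    and flat: "\<And>y z p \<eta>. y \<in> \<Gamma> \<Longrightarrow> z \<in> \<Gamma> \<Longrightarrow> p \<in> \<Gamma> \<Longrightarrow> dist y z \<le> h0 \<Longrightarrow> dist y p \<le> h0 \<Longrightarrow>
         y \<noteq> z \<Longrightarrow> 0 \<le> (p - y) \<bullet> (z - y) \<Longrightarrow> (p - y) \<bullet> (z - y) \<le> (z - y) \<bullet> (z - y) \<Longrightarrow>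
         \<eta> \<bullet> (z - y) = 0 \<Longrightarrow> norm \<eta> = 1 \<Longrightarrow> \<bar>(p - y) \<bullet> \<eta>\<bar> \<le> dist y z"
    and "diameter T \<le> h0" and "\<Gamma> \<inter> frontier T = {y, z}" and "y \<noteq> z"
    and \<eta>: "norm \<eta> = 1" "\<eta> \<bullet> (z - y) = 0"
    and nodes: "\<forall>l \<le> k. \<forall>t \<in> gl_nodes l. xp l t \<in> \<Gamma> \<inter> T \<and> (xp l t - gl_point y z t) \<bullet> (z - y) = 0"
    and "poly2 k v" and "x \<in> T"
  shows "\<bar>v x\<bar> \<le> B \<and> diameter T * norm (grad v x) \<le> B"
proof -
  define r where "r = dist y z"
  have "compact T" "convex T"
    unfolding T_def by (auto intro: compact_convex_hull finite_imp_compact)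
  then have yz: "y \<in> \<Gamma> \<inter> T" "z \<in> \<Gamma> \<inter> T"
    using \<open>\<Gamma> \<inter> frontier T = {y, z}\<close> frontier_subset_closed[OF compact_imp_closed] by auto
  have dist_le: "dist p q \<le> diameter T" if "p \<in> T" "q \<in> T" for p q
    using diameter_bounded_bound[OF compact_imp_bounded[OF \<open>compact T\<close>] that] .
  have r: "0 < r" "r \<le> diameter T"
    unfolding r_def using \<open>y \<noteq> z\<close> dist_le yz by auto
  define u where "u = (1 / r) *\<^sub>R (z - y)"
  have u: "norm u = 1" "\<eta> \<bullet> u = 0"
    unfolding u_def r_def using \<open>y \<noteq> z\<close> \<eta> by (auto simp: dist_norm norm_minus_commute)
  define \<sigma> \<omega> where "\<sigma> = frame_coord (midpoint y z) u r" and "\<omega> = frame_coord (midpoint y z) \<eta> r"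
  have "r \<noteq> 0"
    using r(1) by simp
  obtain Q where Q: "total_degree_le k Q" and v: "v = (\<lambda>p. bpoly Q (\<sigma> p) (\<omega> p))"
    unfolding \<sigma>_def \<omega>_def by (rule poly2_in_frame[OF \<open>poly2 k v\<close> u(1) \<eta>(1) u(2) \<open>r \<noteq> 0\<close>]) blast
  have node: "\<sigma> (xp l t) = t \<and> \<bar>\<omega> (xp l t)\<bar> \<le> 2" if "l \<le> k" "t \<in> gl_nodes l" for l t
  proof -
    have p: "xp l t \<in> \<Gamma> \<inter> T" "(xp l t - gl_point y z t) \<bullet> (z - y) = 0"
      using nodes that by auto
    have "dist y z \<le> h0" "dist y (xp l t) \<le> h0"
      using dist_le[of y z] dist_le[of y "xp l t"] yz p(1) \<open>diameter T \<le> h0\<close> by auto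
    then have "\<bar>(xp l t - y) \<bullet> \<eta>\<bar> \<le> r"
      unfolding r_def using gl_point_projection_between[OF abs_le_1_if_gl_node[OF that(2)] p(2)]
        yz p(1) \<open>y \<noteq> z\<close> \<eta> by (intro flat) auto
    note coords = gl_point_frame_coords[OF \<open>y \<noteq> z\<close> \<eta>(2) p(2), folded r_def]
    have "\<bar>\<omega> (xp l t)\<bar> = 2 / r * \<bar>(xp l t - y) \<bullet> \<eta>\<bar>"
      using coords(2) r(1) by (simp add: \<omega>_def abs_mult)
    also have "\<dots> \<le> 2"
      using \<open>\<bar>(xp l t - y) \<bullet> \<eta>\<bar> \<le> r\<close> r(1) by (simp add: field_simps)
    finally show ?thesis
      using coords(1) by (simp add: \<sigma>_def u_def)
  qed
  define R where "R = 2 * diameter T / r"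
  have "1 \<le> R"
    unfolding R_def using r by simp
  have "midpoint y z \<in> T"
    using closed_segment_subset[of y T z] midpoint_in_closed_segment[of y z] yz \<open>convex T\<close> by blast
  then have "\<bar>\<sigma> x\<bar> \<le> R" "\<bar>\<omega> x\<bar> \<le> R"
    unfolding \<sigma>_def \<omega>_def R_def using abs_frame_coord_le u(1) \<eta>(1) r(1) dist_le \<open>x \<in> T\<close> by blast+
  with reference[OF Q, of "\<lambda>l t. \<omega> (xp l t)"] node \<open>1 \<le> R\<close>
  have est: "\<bar>bpoly Q (\<sigma> x) (\<omega> x)\<bar> \<le> C * R ^ k * gauss_legendre.node_data k Q (\<lambda>l t. \<omega> (xp l t))"
    "R * (\<bar>bpoly (map_poly pderiv Q) (\<sigma> x) (\<omega> x)\<bar> + \<bar>bpoly (pderiv Q) (\<sigma> x) (\<omega> x)\<bar>)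
       \<le> C * R ^ k * gauss_legendre.node_data k Q (\<lambda>l t. \<omega> (xp l t))"
    by auto
  have "dirderiv_pow j \<eta> v p = (2 / r) ^ j * bpoly ((pderiv ^^ j) Q) (\<sigma> p) (\<omega> p)" for j p
    unfolding v \<sigma>_def \<omega>_def dirderiv_pow_bpoly_frame[OF u(2) \<eta>(1)] ..
  then have "gauss_legendre.node_data k Q (\<lambda>l t. \<omega> (xp l t))
      \<le> (\<Sum>l\<le>k. real (Suc k) * ((r / 2) ^ (k - l) * Max ((\<lambda>t. \<bar>dirderiv_pow (k - l) \<eta> v (xp l t)\<bar>) ` gl_nodes l)))"
    using node by (intro node_data_le_max_dirderiv[OF r(1)]) simp
  then have "C * R ^ k * gauss_legendre.node_data k Q (\<lambda>l t. \<omega> (xp l t))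
      \<le> C * R ^ k * (\<Sum>l\<le>k. real (Suc k) * ((r / 2) ^ (k - l) * Max ((\<lambda>t. \<bar>dirderiv_pow (k - l) \<eta> v (xp l t)\<bar>) ` gl_nodes l)))"
    using \<open>0 \<le> C\<close> \<open>1 \<le> R\<close> by (intro mult_left_mono) auto
  also have "\<dots> \<le> B"
  proof -
    have "0 \<le> Max ((\<lambda>t. \<bar>dirderiv_pow (k - l) \<eta> v (xp l t)\<bar>) ` gl_nodes l)" for l
      using card_gl_nodes[of l] by (intro Max_abs_image_nonneg[OF finite_gl_nodes]) auto
    then show ?thesis
      unfolding B_def R_def r_def[symmetric] by (rule rescaled_sum_le[OF r \<open>0 \<le> C\<close>])
  qed
  finally have "C * R ^ k * gauss_legendre.node_data k Q (\<lambda>l t. \<omega> (xp l t)) \<le> B" .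
  moreover have "diameter T * norm (grad v x)
      \<le> R * (\<bar>bpoly (map_poly pderiv Q) (\<sigma> x) (\<omega> x)\<bar> + \<bar>bpoly (pderiv Q) (\<sigma> x) (\<omega> x)\<bar>)"
    using mult_left_mono[OF norm_grad_bpoly_frame_le[OF u(1) \<eta>(1) r(1)], of "diameter T"] r
    unfolding v \<sigma>_def \<omega>_def R_def by (simp add: field_simps)
  ultimately show ?thesis
    using est unfolding v by auto
qed

theorem lemma3p1:
  fixes \<gamma> :: "real \<Rightarrow> real^2" and \<sigma> :: real and k :: nat
  assumes "smooth_closed_curve \<gamma>" and "1 \<le> k"
  shows "\<exists>C > 0. \<exists>h0 > 0. \<forall>a b c y z (\<eta> :: real^2) (xp :: nat \<Rightarrow> real \<Rightarrow> real^2) v.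
    let T = convex hull {a, b, c}; \<Gamma> = \<gamma> ` {0..1}; hT = diameter T; rT = dist y z in
    nondeg_triangle a b c \<and> hT \<le> h0 \<and> shape_param T \<le> \<sigma>
    \<and> \<Gamma> \<inter> frontier T = {y, z} \<and> y \<noteq> z
    \<and> \<not> (\<exists>e \<in> {closed_segment a b, closed_segment b c, closed_segment c a}. y \<in> e \<and> z \<in> e)
    \<and> norm \<eta> = 1 \<and> \<eta> \<bullet> (z - y) = 0
    \<and> (\<forall>l \<le> k. \<forall>t \<in> gl_nodes l. xp l t \<in> \<Gamma> \<inter> T \<and> (xp l t - gl_point y z t) \<bullet> (z - y) = 0)
    \<and> poly2 k v
    \<longrightarrow> (\<forall>x \<in> T.
          (let R = C * hT ^ k * (\<Sum>l\<le>k. (1 / rT ^ l) *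
                     Max ((\<lambda>t. \<bar>dirderiv_pow (k - l) \<eta> v (xp l t)\<bar>) ` gl_nodes l))
           in \<bar>v x\<bar> \<le> R \<and> hT * norm (grad v x) \<le> R))"
proof -
  obtain C where "C > 0"
    and reference: "\<And>Q \<delta> R s w. total_degree_le k Q \<Longrightarrow> (\<forall>l\<le>k. \<forall>t\<in>gl_nodes l. \<bar>\<delta> l t\<bar> \<le> 2) \<Longrightarrow>
         1 \<le> R \<Longrightarrow> \<bar>s\<bar> \<le> R \<Longrightarrow> \<bar>w\<bar> \<le> R \<Longrightarrow>
         \<bar>bpoly Q s w\<bar> \<le> C * R ^ k * gauss_legendre.node_data k Q \<delta>
       \<and> R * (\<bar>bpoly (map_poly pderiv Q) s w\<bar> + \<bar>bpoly (pderiv Q) s w\<bar>) \<le> C * R ^ k * gauss_legendre.node_data k Q \<delta>"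
    by (rule gauss_legendre.reference_estimate[of k]) blast
  obtain h0 where "h0 > 0"
    and flat: "\<And>y z p \<eta>. y \<in> \<gamma> ` {0..1} \<Longrightarrow> z \<in> \<gamma> ` {0..1} \<Longrightarrow> p \<in> \<gamma> ` {0..1} \<Longrightarrow>
         dist y z \<le> h0 \<Longrightarrow> dist y p \<le> h0 \<Longrightarrow> y \<noteq> z \<Longrightarrow>
         0 \<le> (p - y) \<bullet> (z - y) \<Longrightarrow> (p - y) \<bullet> (z - y) \<le> (z - y) \<bullet> (z - y) \<Longrightarrow>
         \<eta> \<bullet> (z - y) = 0 \<Longrightarrow> norm \<eta> = 1 \<Longrightarrow> \<bar>(p - y) \<bullet> \<eta>\<bar> \<le> dist y z"
    by (rule smooth_closed_curve_flat[OF assms(1)]) blast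
  note estimate = estimate_on_triangle[OF less_imp_le[OF \<open>C > 0\<close>] reference flat]
  show ?thesis
    unfolding Let_def
  proof (rule exI[of _ "real (Suc k) * 2 ^ k * C"], intro conjI exI[of _ h0] allI impI ballI)
    show "0 < real (Suc k) * 2 ^ k * C"
      using \<open>C > 0\<close> by simp
    show "0 < h0"
      by (rule \<open>h0 > 0\<close>)
  qed (elim conjE, (rule estimate[THEN conjunct1] estimate[THEN conjunct2]; assumption))+
qed

end
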